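(* Let $G$ be a graph and let $v_1,\dots,v_d$ be vertices forming a cut in $G$. Let $C$ be one of the connected components of $G-\{v_1,\dots,v_d\}$ and let $G'$ be the union of the remaining components. Then $$\tilde b(G)\le\tilde b(C)\,\tilde b(G')+\sum_{i=1}^d\tilde b(G^i),\qquad G^i=G-N[v_i]-\{v_1,\dots,v_{i-1}\}.$$
   Context: $N[u]$ is the closed neighborhood of $u$ (its neighbors together with $u$); $G-A$ is the induced subgraph on $V(G)\setminus A$. $\mathrm{Ind}(G)$ is the independence complex of $G$ (including the empty face), and $\tilde b(G)=\sum_{i\ge-1}\dim_{\mathbb{K}}\widetilde H_i(\mathrm{Ind}(G);\mathbb{K})$ for a fixed field $\mathbb{K}$; the empty graph has $\tilde b=1$. *)

theory Defs
  imports Complex_Main "HOL-Library.Function_Algebras"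
begin

text \<open>The induced subgraph on a vertex set S is
represented by the pair (E, S): only edges between vertices of S matter.\<close>

definition simple_graph :: "'a set \<Rightarrow> ('a \<Rightarrow> 'a \<Rightarrow> bool) \<Rightarrow> bool" where
  "simple_graph V E \<longleftrightarrow> finite V \<and> (\<forall>u v. E u v \<longrightarrow> E v u) \<and> (\<forall>v. \<not> E v v)"

definition closed_nbhd :: "'a set \<Rightarrow> ('a \<Rightarrow> 'a \<Rightarrow> bool) \<Rightarrow> 'a \<Rightarrow> 'a set" where
  "closed_nbhd V E u = insert u {w \<in> V. E u w}"

definition component_of :: "('a \<Rightarrow> 'a \<Rightarrow> bool) \<Rightarrow> 'a set \<Rightarrow> 'a \<Rightarrow> 'a set" where
  "component_of E S x = {y. (x, y) \<in> {(u, w). u \<in> S \<and> w \<in> S \<and> E u w}\<^sup>* \<and> y \<in> S}"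

definition is_component :: "('a \<Rightarrow> 'a \<Rightarrow> bool) \<Rightarrow> 'a set \<Rightarrow> 'a set \<Rightarrow> bool" where
  "is_component E S C \<longleftrightarrow> (\<exists>x\<in>S. C = component_of E S x)"

definition Ind :: "('a \<Rightarrow> 'a \<Rightarrow> bool) \<Rightarrow> 'a set \<Rightarrow> 'a set set" where
  "Ind E S = {\<sigma>. \<sigma> \<subseteq> S \<and> (\<forall>u\<in>\<sigma>. \<forall>w\<in>\<sigma>. \<not> E u w)}"

text \<open>Simplicial chains of the augmented (reduced) chain complex of a simplicial
complex Delta with coefficients in the field 'k, graded by the number k of
vertices of a face (so k = i + 1 for homological degree i; k = 0 is the empty
face in degree -1).\<close>
definition chains :: "'k itself \<Rightarrow> 'a set set \<Rightarrow> nat \<Rightarrow> ('a set \<Rightarrow> 'k::field) set" where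
  "chains _ \<Delta> k = {f. \<forall>\<sigma>. f \<sigma> \<noteq> 0 \<longrightarrow> \<sigma> \<in> \<Delta> \<and> card \<sigma> = k}"

definition boundary :: "'a::linorder set \<Rightarrow> ('a set \<Rightarrow> 'k::field) \<Rightarrow> ('a set \<Rightarrow> 'k)" where
  "boundary S f = (\<lambda>\<tau>. \<Sum>v\<in>S - \<tau>. (- 1) ^ card {u\<in>\<tau>. u < v} * f (insert v \<tau>))"

definition chain_scale :: "'k::field \<Rightarrow> ('a set \<Rightarrow> 'k) \<Rightarrow> ('a set \<Rightarrow> 'k)" where
  "chain_scale c f = (\<lambda>x. c * f x)"

definition chain_dim :: "('a set \<Rightarrow> 'k::field) set \<Rightarrow> nat" where
  "chain_dim W = vector_space.dim chain_scale W"

text \<open>dim_K of the reduced homology of Delta (vertices in S) in degree k - 1: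
  dim ker(boundary_k) - dim im(boundary_{k+1}).\<close>
definition reduced_betti :: "'k::field itself \<Rightarrow> 'a::linorder set \<Rightarrow> 'a set set \<Rightarrow> nat \<Rightarrow> nat" where
  "reduced_betti K S \<Delta> k =
     chain_dim {f \<in> chains K \<Delta> k. boundary S f = (0 :: 'a set \<Rightarrow> 'k)}
     - chain_dim (boundary S ` chains K \<Delta> (Suc k))"

text \<open>btilde(G) for the induced subgraph on S: sum of all reduced Betti numbers
of Ind(G) over the field 'k (degrees -1 .. |S|-1; higher chain groups vanish).\<close>
definition btilde :: "'k::field itself \<Rightarrow> ('a::linorder \<Rightarrow> 'a \<Rightarrow> bool) \<Rightarrow> 'a set \<Rightarrow> nat" where
  "btilde K E S = (\<Sum>k\<le>card S. reduced_betti K S (Ind E S) k)"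

end

theory Submission
  imports Defs
begin

text \<open>Over a field, the total reduced Betti number of a finite simplicial complex \<open>\<Delta>\<close> equals
  \<open>|\<Delta>| - 2 rank \<partial>\<close> for the augmented boundary map \<open>\<partial>\<close>, because \<open>dim C\<^sub>k = dim Z\<^sub>k + rank \<partial>\<^sub>k\<close>
  in every degree.  Both steps of the argument are therefore lower bounds on ranks of boundary maps.

  Deletion: \<open>Ind(G)\<close> is the disjoint union of \<open>Ind(G - v)\<close> and the cone \<open>v * Ind(G - N[v])\<close>.
  Projecting boundaries onto the chains through \<open>v\<close> shows
  \<open>rank \<partial>\<^sub>G \<ge> rank \<partial>\<^sub>G\<^sub>-\<^sub>v + rank \<partial>\<^sub>G\<^sub>-\<^sub>N\<^sub>[\<^sub>v\<^sub>]\<close>, hence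
  \<open>b(G) \<le> b(G - v) + b(G - N[v])\<close>.  Deleting \<open>v\<^sub>1, \<dots>, v\<^sub>d\<close> in turn produces the sum and leaves
  the disjoint union of \<open>C\<close> and \<open>G'\<close>.

  Join: \<open>Ind(C \<union> G')\<close> is the join of \<open>Ind(C)\<close> and \<open>Ind(G')\<close>, whose chains are cross products.
  The boundaries of \<open>\<alpha> \<times> l\<close> (\<open>\<alpha>\<close> any face of \<open>Ind(C)\<close>, \<open>\<partial>l\<close> running through a basis of the
  boundaries of \<open>Ind(G')\<close>) together with the products \<open>\<partial>\<alpha> \<times> h\<close> (\<open>\<partial>\<alpha>\<close> a basis of the boundaries
  of \<open>Ind(C)\<close>, \<open>h\<close> a basis of a complement of the boundaries among the cycles of \<open>Ind(G')\<close>) are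
  linearly independent, which gives \<open>b(C \<union> G') \<le> b(C) b(G')\<close>.\<close>

lemma sum_fun_apply: "(\<Sum>i\<in>I. f i) x = (\<Sum>i\<in>I. f i x)"
  by (induction I rule: infinite_finite_induct) auto

text \<open>Chains live in the infinite-dimensional space \<open>'a set \<Rightarrow> 'k\<close>, so the finite-dimensional theory
  of the library does not apply; instead, dimensions are compared inside finitely spanned sets.\<close>

definition finitely_spanned :: "('a::comm_ring_1 \<Rightarrow> 'b \<Rightarrow> 'b::ab_group_add) \<Rightarrow> 'b set \<Rightarrow> bool" where
  "finitely_spanned scale V \<longleftrightarrow> (\<exists>W. finite W \<and> V \<subseteq> module.span scale W)"

context vector_space
begin

lemma finitely_spannedI: "finite W \<Longrightarrow> V \<subseteq> span W \<Longrightarrow> finitely_spanned scale V"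
  unfolding finitely_spanned_def by blast

lemma finitely_spanned_subset: "finitely_spanned scale T \<Longrightarrow> S \<subseteq> T \<Longrightarrow> finitely_spanned scale S"
  unfolding finitely_spanned_def by blast

lemma finitely_spanned_image:
  assumes "module_hom scale scale f" "finitely_spanned scale U"
  shows "finitely_spanned scale (f ` U)"
proof -
  obtain W where "finite W" "U \<subseteq> span W" using assms(2) unfolding finitely_spanned_def by blast
  then have "f ` U \<subseteq> span (f ` W)" using module_hom.span_image[OF assms(1)] by blast
  then show ?thesis using \<open>finite W\<close> by (blast intro: finitely_spannedI)
qed

lemma finitely_spanned_basis:
  assumes "finitely_spanned scale V"
  obtains B where "B \<subseteq> V" "independent B" "V \<subseteq> span B" "finite B" "card B = dim V"
proof -
  obtain W where W: "finite W" "V \<subseteq> span W" using assms unfolding finitely_spanned_def by blast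
  obtain B where B: "B \<subseteq> V" "independent B" "V \<subseteq> span B" "card B = dim V"
    using basis_exists by blast
  have "B \<subseteq> span W" using B(1) W(2) by blast
  then have "finite B" using independent_span_bound[OF W(1) B(2)] by blast
  then show ?thesis by (rule that[OF B(1-3) _ B(4)])
qed

lemma independent_card_le_dim_finitely_spanned:
  assumes "finitely_spanned scale V" "B \<subseteq> V" "independent B"
  shows "finite B" "card B \<le> dim V"
proof -
  obtain Bv where Bv: "Bv \<subseteq> V" "independent Bv" "V \<subseteq> span Bv" "finite Bv" "card Bv = dim V"
    by (rule finitely_spanned_basis[OF assms(1)])
  have "B \<subseteq> span Bv" using assms(2) Bv(3) by blast
  from independent_span_bound[OF Bv(4) assms(3) this] Bv(5)
  show "finite B" "card B \<le> dim V" by auto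
qed

lemma dim_subset_finitely_spanned:
  assumes "finitely_spanned scale T" "S \<subseteq> T"
  shows "dim S \<le> dim T"
proof -
  obtain B where "B \<subseteq> S" "independent B" "S \<subseteq> span B" "finite B" "card B = dim S"
    by (rule finitely_spanned_basis[OF finitely_spanned_subset[OF assms]])
  then show ?thesis using independent_card_le_dim_finitely_spanned[OF assms(1), of B] assms(2) by auto
qed

lemma dim_zero_singleton: "dim {0} = 0"
  using dim_span[of "{}"] dim_eq_card_independent[OF independent_empty] by simp

lemma dim_eq_0_if_subset_zero: "S \<subseteq> {0} \<Longrightarrow> dim S = 0"
  using dim_subset_finitely_spanned[OF finitely_spannedI[of "{}" "{0}"], of S] dim_zero_singleton
  by simp

lemma dim_le_dim_add_dim:
  assumes "finitely_spanned scale A" "finitely_spanned scale B" "T \<subseteq> span (A \<union> B)"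
  shows "dim T \<le> dim A + dim B"
proof -
  obtain Ba where Ba: "Ba \<subseteq> A" "independent Ba" "A \<subseteq> span Ba" "finite Ba" "card Ba = dim A"
    by (rule finitely_spanned_basis[OF assms(1)])
  obtain Bb where Bb: "Bb \<subseteq> B" "independent Bb" "B \<subseteq> span Bb" "finite Bb" "card Bb = dim B"
    by (rule finitely_spanned_basis[OF assms(2)])
  have "A \<union> B \<subseteq> span (Ba \<union> Bb)"
    using Ba(3) Bb(3) span_mono[of Ba "Ba \<union> Bb"] span_mono[of Bb "Ba \<union> Bb"] by blast
  then have "T \<subseteq> span (Ba \<union> Bb)" using assms(3) span_minimal[OF _ subspace_span] by blast
  then have "dim T \<le> card (Ba \<union> Bb)" using dim_le_card Ba(4) Bb(4) by blast
  also have "\<dots> \<le> card Ba + card Bb" by (rule card_Un_le)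
  finally show ?thesis using Ba(5) Bb(5) by simp
qed

lemma independent_extend_finitely_spanned:
  assumes "finitely_spanned scale Z" "B \<subseteq> Z" "independent B"
  obtains H where "H \<subseteq> Z" "finite H" "independent (B \<union> H)" "B \<inter> H = {}" "card B + card H = dim Z"
proof -
  obtain B' where B': "B \<subseteq> B'" "B' \<subseteq> Z" "independent B'" "Z \<subseteq> span B'"
    using maximal_independent_subset_extend[OF assms(2,3)] by blast
  have "finite B'" by (rule independent_card_le_dim_finitely_spanned(1)[OF assms(1) B'(2,3)])
  moreover have "card B' = dim Z" by (rule basis_card_eq_dim[OF B'(2,4,3)])
  moreover have "B \<union> (B' - B) = B'" using B'(1) by blast
  ultimately show ?thesis
    using that[of "B' - B"] B' card_Diff_subset[OF finite_subset[OF B'(1)] B'(1)] card_mono[OF _ B'(1)]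
    by auto
qed

lemma lift_basis_of_image:
  assumes "finitely_spanned scale (f ` Y)"
  obtains L where "L \<subseteq> Y" "inj_on f L" "independent (f ` L)" "f ` Y \<subseteq> span (f ` L)"
    "finite L" "card L = dim (f ` Y)"
proof -
  obtain B where B: "B \<subseteq> f ` Y" "independent B" "f ` Y \<subseteq> span B" "finite B" "card B = dim (f ` Y)"
    by (rule finitely_spanned_basis[OF assms])
  have "\<forall>y\<in>B. \<exists>x. x \<in> Y \<and> f x = y" using B(1) by blast
  then obtain g where g: "\<forall>y\<in>B. g y \<in> Y \<and> f (g y) = y" by (rule bchoice[THEN exE])
  have fg: "f ` g ` B = B" using g by (force simp: image_image)
  have "inj_on f (g ` B)" using g by (fastforce intro!: inj_onI)
  moreover have "card (g ` B) = card B" using g by (metis card_image inj_onI)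
  ultimately show ?thesis using that[of "g ` B"] B g fg by auto
qed

lemma sum_scale_eq_0_inj_on:
  assumes "finite L" "inj_on f L" "independent (f ` L)" "(\<Sum>l\<in>L. r l *s f l) = 0" "l \<in> L"
  shows "r l = 0"
proof -
  have "(\<Sum>y\<in>f ` L. r (the_inv_into L f y) *s y) = (\<Sum>l\<in>L. r l *s f l)"
    by (subst sum.reindex[OF assms(2)]) (simp add: the_inv_into_f_f[OF assms(2)])
  then have s0: "(\<Sum>y\<in>f ` L. r (the_inv_into L f y) *s y) = 0" using assms(4) by simp
  have "r (the_inv_into L f (f l)) = 0"
    by (rule independentD[OF assms(3) _ _ s0]) (use assms(1,5) in auto)
  then show ?thesis using the_inv_into_f_f[OF assms(2,5)] by simp
qed

lemma independent_Un_kernel_lift: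
  assumes f: "module_hom scale scale f"
    and X: "independent X" "\<And>x. x \<in> X \<Longrightarrow> f x = 0"
    and L: "finite L" "inj_on f L" "independent (f ` L)"
  shows "independent (X \<union> L)" "X \<inter> L = {}"
proof -
  show disj: "X \<inter> L = {}"
    using X(2) L(3) dependent_zero by force
  show "independent (X \<union> L)"
    unfolding independent_explicit_module
  proof (intro allI impI)
    fix t u v
    assume t: "finite t" "t \<subseteq> X \<union> L" and s0: "(\<Sum>v\<in>t. u v *s v) = 0" and v: "v \<in> t"
    have split: "(\<Sum>v\<in>t. g v) = (\<Sum>v\<in>t \<inter> X. g v) + (\<Sum>v\<in>t \<inter> L. g v)" for g :: "'b \<Rightarrow> 'b"
    proof -
      have "t = (t \<inter> X) \<union> (t \<inter> L)" using t(2) by blast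
      then show ?thesis using sum.union_disjoint[of "t \<inter> X" "t \<inter> L" g] t(1) disj by auto
    qed
    have uL: "u w = 0" if "w \<in> t \<inter> L" for w
    proof -
      have "0 = f (\<Sum>v\<in>t. u v *s v)" using s0 module_hom.zero[OF f] by simp
      also have "\<dots> = (\<Sum>v\<in>t \<inter> X. u v *s f v) + (\<Sum>v\<in>t \<inter> L. u v *s f v)"
        by (simp add: module_hom.sum[OF f] module_hom.scale[OF f] split[symmetric])
      also have "(\<Sum>v\<in>t \<inter> X. u v *s f v) = 0" using X(2) by (intro sum.neutral) auto
      finally have "(\<Sum>v\<in>t \<inter> L. u v *s f v) = 0" by simp
      then show ?thesis
        using sum_scale_eq_0_inj_on[of "t \<inter> L" f u w] L that t(1)
        by (meson independent_mono image_mono inf_le2 inj_on_subset finite_Int)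
    qed
    then have "(\<Sum>v\<in>t \<inter> L. u v *s v) = 0" by (intro sum.neutral) auto
    then have "(\<Sum>v\<in>t \<inter> X. u v *s v) = 0" using s0 split[of "\<lambda>v. u v *s v"] by simp
    then show "u v = 0"
      using uL independentD[OF X(1), of "t \<inter> X" u v] t v by blast
  qed
qed

lemma dim_add_dim_image_le:
  assumes f: "module_hom scale scale f" and T: "finitely_spanned scale T"
    and XT: "X \<subseteq> T" and YT: "Y \<subseteq> T" and X_kernel: "\<And>x. x \<in> X \<Longrightarrow> f x = 0"
  shows "dim X + dim (f ` Y) \<le> dim T"
proof -
  obtain Bx where Bx: "Bx \<subseteq> X" "independent Bx" "X \<subseteq> span Bx" "finite Bx" "card Bx = dim X"
    by (rule finitely_spanned_basis[OF finitely_spanned_subset[OF T XT]])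
  obtain L where L: "L \<subseteq> Y" "inj_on f L" "independent (f ` L)" "f ` Y \<subseteq> span (f ` L)"
      "finite L" "card L = dim (f ` Y)"
    by (rule lift_basis_of_image[OF finitely_spanned_image[OF f finitely_spanned_subset[OF T YT]]])
  have i: "independent (Bx \<union> L)" "Bx \<inter> L = {}"
    using independent_Un_kernel_lift[OF f Bx(2) _ L(5,2,3)] X_kernel Bx(1) by auto
  have "card (Bx \<union> L) \<le> dim T"
    by (rule independent_card_le_dim_finitely_spanned(2)[OF T _ i(1)]) (use Bx(1) L(1) XT YT in blast)
  then show ?thesis using card_Un_disjoint[OF Bx(4) L(5) i(2)] Bx(5) L(6) by simp
qed

lemma rank_nullity:
  assumes f: "module_hom scale scale f" and U: "finitely_spanned scale U" "subspace U"
  shows "dim U = dim {x \<in> U. f x = 0} + dim (f ` U)"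
proof (rule antisym)
  let ?Z = "{x \<in> U. f x = 0}"
  have "finitely_spanned scale ?Z" by (rule finitely_spanned_subset[OF U(1)]) blast
  then obtain Bz where Bz: "Bz \<subseteq> ?Z" "independent Bz" "?Z \<subseteq> span Bz" "finite Bz" "card Bz = dim ?Z"
    by (rule finitely_spanned_basis)
  obtain L where L: "L \<subseteq> U" "inj_on f L" "independent (f ` L)" "f ` U \<subseteq> span (f ` L)"
      "finite L" "card L = dim (f ` U)"
    by (rule lift_basis_of_image[OF finitely_spanned_image[OF f U(1)]])
  have "U \<subseteq> span (Bz \<union> L)"
  proof
    fix u assume u: "u \<in> U"
    have "f u \<in> f ` span L" using u L(4) module_hom.span_image[OF f, of L] by auto
    then obtain l where l: "l \<in> span L" "f l = f u" by auto
    have "l \<in> U" using l(1) span_minimal[OF L(1) U(2)] by auto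
    then have "u - l \<in> ?Z" using u l(2) U(2) subspace_diff module_hom.diff[OF f] by auto
    then have "u - l \<in> span (Bz \<union> L)" using Bz(3) span_mono[of Bz "Bz \<union> L"] by auto
    moreover have "l \<in> span (Bz \<union> L)" using l(1) span_mono[of L "Bz \<union> L"] by auto
    ultimately have "(u - l) + l \<in> span (Bz \<union> L)" by (rule span_add)
    then show "u \<in> span (Bz \<union> L)" by simp
  qed
  then have "dim U \<le> card (Bz \<union> L)" using dim_le_card Bz(4) L(5) by auto
  also have "\<dots> \<le> card Bz + card L" by (rule card_Un_le)
  finally show "dim U \<le> dim ?Z + dim (f ` U)" using Bz(5) L(6) by simp
  show "dim ?Z + dim (f ` U) \<le> dim U"
    by (rule dim_add_dim_image_le[OF f U(1)]) auto
qed

lemma dim_image_inj_on: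
  assumes f: "module_hom scale scale f" and U: "finitely_spanned scale U" "subspace U"
    and inj: "inj_on f U"
  shows "dim (f ` U) = dim U"
proof -
  have "{x \<in> U. f x = 0} \<subseteq> {0}"
    using inj_onD[OF inj] module_hom.zero[OF f] subspace_0[OF U(2)] by fastforce
  then show ?thesis using rank_nullity[OF f U] dim_eq_0_if_subset_zero by simp
qed

lemma independent_image_if_scalars_zero:
  assumes fin: "finite I" and zero: "\<And>c. (\<Sum>i\<in>I. c i *s v i) = 0 \<Longrightarrow> \<forall>i\<in>I. c i = 0"
  shows "inj_on v I" "independent (v ` I)"
proof -
  show inj: "inj_on v I"
  proof (rule inj_onI, rule ccontr)
    fix i j assume ij: "i \<in> I" "j \<in> I" "v i = v j" "i \<noteq> j"
    define c :: "_ \<Rightarrow> 'a" where "c k = (if k = i then 1 else if k = j then - 1 else 0)" for k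
    have "(\<Sum>k\<in>I. c k *s v k) = (\<Sum>k\<in>I. (if k = i then v i else 0) + (if k = j then - v j else 0))"
      by (rule sum.cong[OF refl]) (use ij in \<open>auto simp: c_def\<close>)
    also have "\<dots> = 0" using fin ij by (simp add: sum.distrib)
    finally have "c i = 0" using zero ij(1) by blast
    then show False by (simp add: c_def)
  qed
  show "independent (v ` I)"
  proof (rule independent_if_scalars_zero)
    show "finite (v ` I)" using fin by simp
    fix u w assume s: "(\<Sum>x\<in>v ` I. u x *s x) = 0" and w: "w \<in> v ` I"
    have "(\<Sum>i\<in>I. u (v i) *s v i) = 0" using s by (simp add: sum.reindex[OF inj])
    then have "\<forall>i\<in>I. u (v i) = 0" by (rule zero)
    then show "u w = 0" using w by blast
  qed
qed

lemma span_disjoint_add_eq_0: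
  assumes "independent (B1 \<union> B2)" "B1 \<inter> B2 = {}" "finite B1" "finite B2"
    and "y \<in> span B1" "z \<in> span B2" "y + z = 0"
  shows "y = 0"
proof -
  obtain p where p: "y = (\<Sum>w\<in>B1. p w *s w)" using assms(3,5) span_finite by auto
  obtain q where q: "z = (\<Sum>w\<in>B2. q w *s w)" using assms(4,6) span_finite by auto
  define c where "c w = (if w \<in> B1 then p w else q w)" for w
  have "(\<Sum>w\<in>B1 \<union> B2. c w *s w) = (\<Sum>w\<in>B1. c w *s w) + (\<Sum>w\<in>B2. c w *s w)"
    by (rule sum.union_disjoint) (use assms(2-4) in auto)
  also have "\<dots> = y + z"
    unfolding p q c_def using assms(2) by (intro arg_cong2[where f = "(+)"] sum.cong) auto
  finally have s0: "(\<Sum>w\<in>B1 \<union> B2. c w *s w) = 0" using assms(7) by simp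
  have "c w = 0" if "w \<in> B1" for w
    by (rule independentD[OF assms(1) _ _ s0]) (use assms(3,4) that in auto)
  then show ?thesis unfolding p c_def by simp
qed

lemma span_lift_boundaries_cycles_add_eq_0:
  assumes f: "module_hom scale scale f"
    and L: "finite L" "inj_on f L" "\<And>l. l \<in> L \<Longrightarrow> f (f l) = 0"
    and H: "finite H" "\<And>h. h \<in> H \<Longrightarrow> f h = 0"
    and indep: "independent (f ` L \<union> H)" "f ` L \<inter> H = {}"
    and xyz: "x \<in> span L" "y \<in> span (f ` L)" "z \<in> span H" "x + y + z = 0"
  shows "y = 0" "z = 0"
proof -
  have kernel: "span B \<subseteq> {v. f v = 0}" if "\<And>b. b \<in> B \<Longrightarrow> f b = 0" for B
  proof (rule span_minimal)
    show "B \<subseteq> {v. f v = 0}" using that by blast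
    show "subspace {v. f v = 0}" by (rule module_hom.subspace_kernel[OF f])
  qed
  have "f y = 0" using kernel[of "f ` L"] L(3) xyz(2) by blast
  moreover have "f z = 0" using kernel[of H] H(2) xyz(3) by blast
  ultimately have fx: "f x = 0"
    using arg_cong[OF xyz(4), of f] module_hom.add[OF f] module_hom.zero[OF f] by simp
  obtain r where r: "x = (\<Sum>l\<in>L. r l *s l)" using xyz(1) span_finite[OF L(1)] by auto
  have "(\<Sum>l\<in>L. r l *s f l) = 0"
    using fx unfolding r by (simp add: module_hom.sum[OF f] module_hom.scale[OF f])
  moreover have "independent (f ` L)" using indep(1) independent_mono by blast
  ultimately have "r l = 0" if "l \<in> L" for l using sum_scale_eq_0_inj_on[OF L(1,2)] that by blast
  then have "y + z = 0" using xyz(4) unfolding r by simp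
  then show "y = 0" using span_disjoint_add_eq_0[OF indep _ H(1) xyz(2,3)] L(1) by blast
  then show "z = 0" using \<open>y + z = 0\<close> by simp
qed

end

interpretation Chains: vector_space "chain_scale :: 'k::field \<Rightarrow> ('a set \<Rightarrow> 'k) \<Rightarrow> _"
  by unfold_locales (auto simp: chain_scale_def algebra_simps fun_eq_iff)

lemma chain_scale_apply: "chain_scale c f x = c * f x"
  by (simp add: chain_scale_def)

lemma module_hom_chainI:
  fixes f :: "('a set \<Rightarrow> 'k::field) \<Rightarrow> ('b set \<Rightarrow> 'k)"
  assumes "\<And>x y. f (x + y) = f x + f y" "\<And>c x. f (chain_scale c x) = chain_scale c (f x)"
  shows "module_hom chain_scale chain_scale f"
  using assms by (simp add: module_hom_iff module_iff_vector_space Chains.vector_space_axioms)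

definition chains_on :: "'a set set \<Rightarrow> ('a set \<Rightarrow> 'k::field) set" where
  "chains_on F = {f. \<forall>\<sigma>. f \<sigma> \<noteq> 0 \<longrightarrow> \<sigma> \<in> F}"

definition unit_chain :: "'a set \<Rightarrow> ('a set \<Rightarrow> 'k::field)" where
  "unit_chain \<sigma> = (\<lambda>\<tau>. if \<tau> = \<sigma> then 1 else 0)"

definition restrict_chain :: "'a set set \<Rightarrow> ('a set \<Rightarrow> 'k::field) \<Rightarrow> ('a set \<Rightarrow> 'k)" where
  "restrict_chain F f = (\<lambda>\<sigma>. if \<sigma> \<in> F then f \<sigma> else 0)"

lemma chains_eq_chains_on: "chains K \<Delta> k = chains_on {\<sigma> \<in> \<Delta>. card \<sigma> = k}"
  unfolding chains_def chains_on_def by auto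

lemma chains_onD: "f \<in> chains_on F \<Longrightarrow> f \<sigma> \<noteq> 0 \<Longrightarrow> \<sigma> \<in> F"
  unfolding chains_on_def by blast

lemma chains_on_subspace: "Chains.subspace (chains_on F)"
  unfolding Chains.subspace_def chains_on_def
  by (auto simp: chain_scale_apply, metis add.right_neutral)

lemma chains_on_mono: "F \<subseteq> G \<Longrightarrow> chains_on F \<subseteq> chains_on G"
  unfolding chains_on_def by auto

lemma unit_chain_in_chains_on: "\<sigma> \<in> F \<Longrightarrow> (unit_chain \<sigma> :: 'a set \<Rightarrow> 'k::field) \<in> chains_on F"
  by (auto simp: chains_on_def unit_chain_def split: if_splits)

lemma inj_unit_chain: "inj unit_chain"
  by (rule injI) (metis unit_chain_def zero_neq_one)

lemma unit_chain_eq_iff: "unit_chain \<rho> = (unit_chain \<sigma> :: _ \<Rightarrow> 'k::field) \<longleftrightarrow> \<rho> = \<sigma>"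
  using inj_unit_chain by (auto dest: injD)

lemma unit_chain_apply_unit_chain:
  "unit_chain \<rho> \<sigma> = (if unit_chain \<rho> = (unit_chain \<sigma> :: _ \<Rightarrow> 'k::field) then 1 else (0 :: 'k))"
  unfolding unit_chain_eq_iff by (simp add: unit_chain_def)

lemma independent_unit_chains:
  assumes "finite F"
  shows "Chains.independent ((unit_chain :: 'a set \<Rightarrow> 'a set \<Rightarrow> 'k::field) ` F)"
proof (rule Chains.independent_if_scalars_zero)
  show "finite ((unit_chain :: 'a set \<Rightarrow> 'a set \<Rightarrow> 'k) ` F)" using assms by simp
  fix c and x :: "'a set \<Rightarrow> 'k"
  assume s: "(\<Sum>y\<in>unit_chain ` F. chain_scale (c y) y) = (0 :: 'a set \<Rightarrow> 'k)"
    and x: "x \<in> unit_chain ` F"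
  then obtain \<sigma> where \<sigma>: "x = unit_chain \<sigma>" by blast
  have "0 = (\<Sum>y\<in>(unit_chain :: 'a set \<Rightarrow> 'a set \<Rightarrow> 'k) ` F. chain_scale (c y) y) \<sigma>" using s by simp
  also have "\<dots> = (\<Sum>y\<in>(unit_chain :: 'a set \<Rightarrow> 'a set \<Rightarrow> 'k) ` F. if y = x then c y else 0)"
    unfolding sum_fun_apply chain_scale_apply \<sigma>
    by (rule sum.cong) (auto simp: unit_chain_apply_unit_chain)
  also have "\<dots> = c x" using assms x by simp
  finally show "c x = 0" by simp
qed

lemma chains_on_eq_span:
  assumes "finite F"
  shows "chains_on F = Chains.span ((unit_chain :: 'a set \<Rightarrow> 'a set \<Rightarrow> 'k::field) ` F)"
proof
  show "chains_on F \<subseteq> Chains.span ((unit_chain :: 'a set \<Rightarrow> 'a set \<Rightarrow> 'k) ` F)"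
  proof
    fix f :: "'a set \<Rightarrow> 'k" assume f: "f \<in> chains_on F"
    have "f = (\<Sum>\<sigma>\<in>F. chain_scale (f \<sigma>) (unit_chain \<sigma>))"
    proof
      fix \<tau>
      have "(\<Sum>\<sigma>\<in>F. chain_scale (f \<sigma>) (unit_chain \<sigma>)) \<tau> = (\<Sum>\<sigma>\<in>F. if \<tau> = \<sigma> then f \<sigma> else 0)"
        by (simp add: sum_fun_apply unit_chain_def chain_scale_apply if_distrib cong: if_cong)
      also have "\<dots> = f \<tau>" using assms f by (auto dest: chains_onD)
      finally show "f \<tau> = (\<Sum>\<sigma>\<in>F. chain_scale (f \<sigma>) (unit_chain \<sigma>)) \<tau>" by simp
    qed
    also have "\<dots> \<in> Chains.span (unit_chain ` F)"
      by (intro Chains.span_sum Chains.span_scale Chains.span_base) auto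
    finally show "f \<in> Chains.span (unit_chain ` F)" .
  qed
  show "Chains.span (unit_chain ` F) \<subseteq> (chains_on F :: ('a set \<Rightarrow> 'k) set)"
    by (rule Chains.span_minimal[OF _ chains_on_subspace]) (auto intro: unit_chain_in_chains_on)
qed

lemma finitely_spanned_chains_on: "finite F \<Longrightarrow> finitely_spanned chain_scale (chains_on F)"
  using chains_on_eq_span by (blast intro: Chains.finitely_spannedI[OF finite_imageI])

lemma dim_chains_on:
  assumes "finite F"
  shows "Chains.dim (chains_on F :: ('a set \<Rightarrow> 'k::field) set) = card F"
  using Chains.dim_eq_card_independent[OF independent_unit_chains[OF assms]]
    card_image[OF inj_on_subset[OF inj_unit_chain]] chains_on_eq_span[OF assms]
  by (metis Chains.dim_span subset_UNIV)

lemma lift_basis_of_image_unit_chains: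
  fixes f :: "('a set \<Rightarrow> 'k::field) \<Rightarrow> ('a set \<Rightarrow> 'k)"
  assumes f: "module_hom chain_scale chain_scale f" and F: "finite F"
  obtains A where "A \<subseteq> F" "inj_on (\<lambda>\<alpha>. f (unit_chain \<alpha>)) A"
    "Chains.independent ((\<lambda>\<alpha>. f (unit_chain \<alpha>)) ` A)" "card A = Chains.dim (f ` chains_on F)"
proof -
  let ?U = "unit_chain ` F :: ('a set \<Rightarrow> 'k) set"
  have "finitely_spanned chain_scale (f ` ?U)"
    by (rule Chains.finitely_spanned_image[OF f Chains.finitely_spannedI[of ?U]])
      (use F in \<open>auto intro: Chains.span_base\<close>)
  then obtain U where U: "U \<subseteq> ?U" "inj_on f U" "Chains.independent (f ` U)"
      "f ` ?U \<subseteq> Chains.span (f ` U)" "finite U" "card U = Chains.dim (f ` ?U)"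
    by (rule Chains.lift_basis_of_image)
  define A where "A = {\<alpha> \<in> F. unit_chain \<alpha> \<in> U}"
  have UA: "U = unit_chain ` A" unfolding A_def using U(1) by auto
  have "Chains.dim (f ` ?U) = Chains.dim (f ` chains_on F)"
    unfolding chains_on_eq_span[OF F] module_hom.span_image[OF f, symmetric] by simp
  moreover have "card U = card A" unfolding UA by (rule card_image[OF inj_on_subset[OF inj_unit_chain]]) simp
  moreover have "inj_on (f \<circ> unit_chain) A"
    using U(2) unfolding UA by (intro comp_inj_on inj_on_subset[OF inj_unit_chain]) auto
  moreover have "(\<lambda>\<alpha>. f (unit_chain \<alpha>)) ` A = f ` U" unfolding UA by (simp add: image_image)
  ultimately show ?thesis using that[of A] U(3,6) unfolding A_def by (simp add: comp_def)
qed

lemma module_hom_restrict_chain: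
  "module_hom chain_scale chain_scale (restrict_chain F :: ('a set \<Rightarrow> 'k::field) \<Rightarrow> _)"
  by (rule module_hom_chainI) (auto simp: restrict_chain_def fun_eq_iff chain_scale_apply)

lemma restrict_chain_in_chains_on: "f \<in> chains_on G \<Longrightarrow> restrict_chain F f \<in> chains_on (F \<inter> G)"
  unfolding restrict_chain_def chains_on_def by auto

lemma restrict_chain_id: "f \<in> chains_on F \<Longrightarrow> restrict_chain F f = f"
  unfolding restrict_chain_def chains_on_def by (auto simp: fun_eq_iff)

lemma restrict_chain_eq_0: "f \<in> chains_on G \<Longrightarrow> F \<inter> G = {} \<Longrightarrow> restrict_chain F f = 0"
  unfolding restrict_chain_def chains_on_def by (auto simp: fun_eq_iff)

lemma finite_subset_Pow:
  assumes "finite S" "F \<subseteq> Pow S"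
  shows "finite F" "\<sigma> \<in> F \<Longrightarrow> finite \<sigma>"
  using assms by (auto intro: rev_finite_subset[of "Pow S"] rev_finite_subset[of S])

definition down_closed :: "'a set set \<Rightarrow> bool" where
  "down_closed F \<longleftrightarrow> (\<forall>\<sigma>\<in>F. \<forall>\<tau>. \<tau> \<subseteq> \<sigma> \<longrightarrow> \<tau> \<in> F)"

abbreviation insertion_sign :: "'a::linorder set \<Rightarrow> 'a \<Rightarrow> 'k::field" where
  "insertion_sign \<tau> v \<equiv> (- 1) ^ card {u \<in> \<tau>. u < v}"

lemma boundary_apply: "boundary S f \<tau> = (\<Sum>v\<in>S - \<tau>. insertion_sign \<tau> v * f (insert v \<tau>))"
  by (simp add: boundary_def)

lemma module_hom_boundary:
  "module_hom chain_scale chain_scale (boundary S :: ('a::linorder set \<Rightarrow> 'k::field) \<Rightarrow> _)"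
  by (rule module_hom_chainI)
    (simp_all add: boundary_def fun_eq_iff distrib_left sum.distrib sum_distrib_left
      mult.left_commute chain_scale_apply)

lemma boundary_nonzeroE:
  assumes "boundary S f \<tau> \<noteq> 0"
  obtains v where "v \<in> S - \<tau>" "f (insert v \<tau>) \<noteq> 0"
  using assms unfolding boundary_apply by (metis (no_types, lifting) mult_zero_right sum.neutral)

lemma boundary_in_chains_on_facets:
  assumes "f \<in> chains_on F"
  shows "boundary S f \<in> chains_on {\<tau>. \<exists>v. v \<notin> \<tau> \<and> insert v \<tau> \<in> F}"
proof (unfold chains_on_def, rule CollectI, intro allI impI)
  fix \<tau> assume "boundary S f \<tau> \<noteq> 0"
  then obtain v where "v \<in> S - \<tau>" "f (insert v \<tau>) \<noteq> 0" by (rule boundary_nonzeroE)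
  then show "\<tau> \<in> {\<tau>. \<exists>v. v \<notin> \<tau> \<and> insert v \<tau> \<in> F}" using chains_onD[OF assms] by blast
qed

lemma boundary_in_chains_on:
  assumes "down_closed F" "f \<in> chains_on F"
  shows "boundary S f \<in> chains_on F"
proof -
  have "{\<tau>. \<exists>v. v \<notin> \<tau> \<and> insert v \<tau> \<in> F} \<subseteq> F"
    using assms(1) unfolding down_closed_def by blast
  then show ?thesis using boundary_in_chains_on_facets[OF assms(2)] chains_on_mono by blast
qed

lemma boundary_in_chains_on_card:
  assumes "down_closed F" "\<forall>\<sigma>\<in>F. finite \<sigma>" "f \<in> chains_on {\<sigma>\<in>F. card \<sigma> = Suc k}"
  shows "boundary S f \<in> chains_on {\<sigma>\<in>F. card \<sigma> = k}"
proof -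
  have "{\<tau>. \<exists>v. v \<notin> \<tau> \<and> insert v \<tau> \<in> {\<sigma>\<in>F. card \<sigma> = Suc k}} \<subseteq> {\<sigma>\<in>F. card \<sigma> = k}"
    using assms(1,2) unfolding down_closed_def by (auto simp: card_insert_if split: if_splits)
  then show ?thesis using boundary_in_chains_on_facets[OF assms(3)] chains_on_mono by blast
qed

lemma boundary_eq_boundary_subset:
  assumes "f \<in> chains_on F" "\<forall>\<sigma>\<in>F. \<sigma> \<subseteq> S'" "S' \<subseteq> S" "finite S"
  shows "boundary S f = boundary S' f"
proof
  fix \<tau>
  have "(\<Sum>v\<in>S' - \<tau>. insertion_sign \<tau> v * f (insert v \<tau>))
      = (\<Sum>v\<in>S - \<tau>. insertion_sign \<tau> v * f (insert v \<tau>) :: 'b)"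
  proof (rule sum.mono_neutral_left)
    show "\<forall>v\<in>(S - \<tau>) - (S' - \<tau>). insertion_sign \<tau> v * f (insert v \<tau>) = 0"
    proof
      fix v assume "v \<in> (S - \<tau>) - (S' - \<tau>)"
      then have "insert v \<tau> \<notin> F" using assms(2) by blast
      then show "insertion_sign \<tau> v * f (insert v \<tau>) = 0" using chains_onD[OF assms(1)] by auto
    qed
  qed (use assms(3,4) in auto)
  then show "boundary S f \<tau> = boundary S' f \<tau>" by (simp add: boundary_apply)
qed

lemma card_less_insert:
  assumes "finite \<tau>" "v \<notin> \<tau>"
  shows "card {u \<in> insert v \<tau>. u < w} = card {u \<in> \<tau>. u < w} + (if v < w then 1 else 0)"
proof -
  have "{u \<in> insert v \<tau>. u < w} = (if v < w then insert v {u \<in> \<tau>. u < w} else {u \<in> \<tau>. u < w})"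
    by auto
  then show ?thesis using assms by simp
qed

lemma sum_off_diagonal_antisym:
  fixes g :: "'a::linorder \<Rightarrow> 'a \<Rightarrow> 'b::ab_group_add"
  assumes "finite A" "\<And>v w. v \<in> A \<Longrightarrow> w \<in> A \<Longrightarrow> v \<noteq> w \<Longrightarrow> g v w = - g w v"
  shows "(\<Sum>v\<in>A. \<Sum>w\<in>A - {v}. g v w) = 0"
proof -
  let ?P = "Sigma A (\<lambda>v. A - {v})"
  let ?P1 = "{p \<in> ?P. fst p < snd p}"
  have fin: "finite ?P" using assms(1) by auto
  have "(\<Sum>v\<in>A. \<Sum>w\<in>A - {v}. g v w) = (\<Sum>p\<in>?P. g (fst p) (snd p))"
    by (subst sum.Sigma) (use assms(1) in \<open>auto simp: case_prod_beta\<close>)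
  also have "?P = ?P1 \<union> prod.swap ` ?P1" by (auto simp: neq_iff image_iff)
  also have "(\<Sum>p\<in>?P1 \<union> prod.swap ` ?P1. g (fst p) (snd p))
      = (\<Sum>p\<in>?P1. g (fst p) (snd p)) + (\<Sum>p\<in>prod.swap ` ?P1. g (fst p) (snd p))"
    by (rule sum.union_disjoint) (use fin in auto)
  also have "(\<Sum>p\<in>prod.swap ` ?P1. g (fst p) (snd p)) = (\<Sum>p\<in>?P1. g (snd p) (fst p))"
    by (subst sum.reindex) (auto intro: inj_on_subset[OF swap_inj_on])
  also have "(\<Sum>p\<in>?P1. g (fst p) (snd p)) + (\<Sum>p\<in>?P1. g (snd p) (fst p)) = 0"
    unfolding sum.distrib[symmetric] using assms(2) by (intro sum.neutral) auto
  finally show ?thesis .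
qed

lemma insertion_sign_swap:
  assumes "finite \<tau>" "v \<notin> \<tau>" "w \<notin> \<tau>" "v \<noteq> w"
  shows "insertion_sign \<tau> v * insertion_sign (insert v \<tau>) w
    = - (insertion_sign \<tau> w * insertion_sign (insert w \<tau>) v :: 'k::field)"
  unfolding card_less_insert[OF assms(1,2)] card_less_insert[OF assms(1,3)]
  using assms(4) by (cases v w rule: linorder_cases) (auto simp: power_add)

lemma boundary_boundary:
  fixes f :: "'a::linorder set \<Rightarrow> 'k::field"
  assumes "finite S" "\<And>\<sigma>. f \<sigma> \<noteq> 0 \<Longrightarrow> finite \<sigma>"
  shows "boundary S (boundary S f) = 0"
proof
  fix \<tau>
  define g where "g v w = insertion_sign \<tau> v * (insertion_sign (insert v \<tau>) w * f (insert w (insert v \<tau>)))"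
    for v w
  have "boundary S (boundary S f) \<tau> = (\<Sum>v\<in>S - \<tau>. insertion_sign \<tau> v *
      (\<Sum>w\<in>S - insert v \<tau>. insertion_sign (insert v \<tau>) w * f (insert w (insert v \<tau>))))"
    unfolding boundary_apply ..
  also have "\<dots> = (\<Sum>v\<in>S - \<tau>. \<Sum>w\<in>(S - \<tau>) - {v}. g v w)"
  proof -
    have "S - insert v \<tau> = (S - \<tau>) - {v}" for v by blast
    then show ?thesis unfolding g_def sum_distrib_left by simp
  qed
  also have "\<dots> = 0"
  proof (rule sum_off_diagonal_antisym)
    fix v w assume vw: "v \<in> S - \<tau>" "w \<in> S - \<tau>" "v \<noteq> w"
    show "g v w = - g w v"
    proof (cases "f (insert w (insert v \<tau>)) = 0")
      case False
      then have "finite (insert w (insert v \<tau>))" by (rule assms(2))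
      then have "finite \<tau>" by simp
      then have "insertion_sign \<tau> v * insertion_sign (insert v \<tau>) w
          = - (insertion_sign \<tau> w * insertion_sign (insert w \<tau>) v :: 'k)"
        by (rule insertion_sign_swap) (use vw in auto)
      then show ?thesis unfolding g_def insert_commute[of v w] by (simp add: mult.assoc[symmetric])
    qed (simp add: g_def insert_commute)
  qed (use assms(1) in simp)
  finally show "boundary S (boundary S f) \<tau> = 0 \<tau>" by simp
qed

lemma boundary_boundary_chains_on:
  assumes "finite S" "F \<subseteq> Pow S" "f \<in> chains_on F"
  shows "boundary S (boundary S f) = 0"
  using assms finite_subset_Pow(2)[OF assms(1,2)] chains_onD by (blast intro: boundary_boundary)

definition boundary_rank :: "'k::field itself \<Rightarrow> 'a::linorder set \<Rightarrow> 'a set set \<Rightarrow> nat" where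
  "boundary_rank K S F = Chains.dim (boundary S ` chains_on F :: ('a set \<Rightarrow> 'k) set)"

definition cycle_dim :: "'k::field itself \<Rightarrow> 'a::linorder set \<Rightarrow> 'a set set \<Rightarrow> nat" where
  "cycle_dim K S F = Chains.dim {f \<in> chains_on F :: ('a set \<Rightarrow> 'k) set. boundary S f = 0}"

lemma reduced_betti_eq:
  "reduced_betti K S F k = cycle_dim K S {\<sigma>\<in>F. card \<sigma> = k} - boundary_rank K S {\<sigma>\<in>F. card \<sigma> = Suc k}"
  unfolding reduced_betti_def chain_dim_def cycle_dim_def boundary_rank_def chains_eq_chains_on ..

lemma finitely_spanned_boundary_image:
  "finite F \<Longrightarrow> finitely_spanned chain_scale (boundary S ` chains_on F :: ('a::linorder set \<Rightarrow> 'k::field) set)"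
  by (rule Chains.finitely_spanned_image[OF module_hom_boundary finitely_spanned_chains_on])

lemma card_eq_cycle_dim_add_boundary_rank:
  fixes K :: "'k::field itself" and S :: "'a::linorder set"
  assumes "finite F"
  shows "card F = cycle_dim K S F + boundary_rank K S F"
proof -
  have "Chains.dim (chains_on F :: ('a set \<Rightarrow> 'k) set) = cycle_dim K S F + boundary_rank K S F"
    unfolding cycle_dim_def boundary_rank_def
    by (rule Chains.rank_nullity[OF module_hom_boundary finitely_spanned_chains_on[OF assms] chains_on_subspace])
  then show ?thesis using dim_chains_on[OF assms, where 'k='k] by simp
qed

lemma boundary_rank_le_cycle_dim:
  fixes K :: "'k::field itself" and S :: "'a::linorder set"
  assumes "finite S" "F \<subseteq> Pow S" "down_closed F"
  shows "boundary_rank K S {\<sigma>\<in>F. card \<sigma> = Suc k} \<le> cycle_dim K S {\<sigma>\<in>F. card \<sigma> = k}"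
proof -
  have fin: "\<forall>\<sigma>\<in>F. finite \<sigma>" using assms(1,2) by (auto intro: rev_finite_subset)
  have "boundary S ` chains_on {\<sigma>\<in>F. card \<sigma> = Suc k}
      \<subseteq> {f \<in> chains_on {\<sigma>\<in>F. card \<sigma> = k} :: ('a set \<Rightarrow> 'k) set. boundary S f = 0}"
  proof (safe intro!: boundary_in_chains_on_card[OF assms(3) fin])
    fix f :: "'a set \<Rightarrow> 'k" assume f: "f \<in> chains_on {\<sigma>\<in>F. card \<sigma> = Suc k}"
    show "boundary S (boundary S f) = 0"
      by (rule boundary_boundary_chains_on[OF assms(1) _ f]) (use assms(2) in blast)
  qed
  moreover have "finite {\<sigma>\<in>F. card \<sigma> = k}" using assms(1,2) by (auto intro: finite_subset)
  ultimately show ?thesis unfolding boundary_rank_def cycle_dim_def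
    by (intro Chains.dim_subset_finitely_spanned)
      (auto intro: Chains.finitely_spanned_subset[OF finitely_spanned_chains_on])
qed

lemma boundary_rank_eq_0:
  fixes K :: "'k::field itself" and S :: "'a::linorder set"
  assumes "F \<subseteq> {{}}"
  shows "boundary_rank K S F = 0"
proof -
  have "boundary S f = 0" if "f \<in> chains_on F" for f :: "'a set \<Rightarrow> 'k"
  proof
    fix \<tau> show "boundary S f \<tau> = 0 \<tau>"
    proof (rule ccontr)
      assume "boundary S f \<tau> \<noteq> 0 \<tau>"
      then obtain v where "f (insert v \<tau>) \<noteq> 0" by (auto elim: boundary_nonzeroE)
      then show False using chains_onD[OF that] assms by blast
    qed
  qed
  then show ?thesis unfolding boundary_rank_def by (intro Chains.dim_eq_0_if_subset_zero) auto
qed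

lemma boundary_rank_Un_le:
  fixes K :: "'k::field itself" and S :: "'a::linorder set"
  assumes "finite F" "finite G"
  shows "boundary_rank K S (F \<union> G) \<le> boundary_rank K S F + boundary_rank K S G"
  unfolding boundary_rank_def
proof (rule Chains.dim_le_dim_add_dim[OF finitely_spanned_boundary_image finitely_spanned_boundary_image])
  show "boundary S ` chains_on (F \<union> G)
      \<subseteq> Chains.span (boundary S ` chains_on F \<union> boundary S ` chains_on G :: ('a set \<Rightarrow> 'k) set)"
  proof
    fix x :: "'a set \<Rightarrow> 'k" assume "x \<in> boundary S ` chains_on (F \<union> G)"
    then obtain f :: "'a set \<Rightarrow> 'k" where f: "f \<in> chains_on (F \<union> G)" "x = boundary S f" by blast
    have e: "restrict_chain F f + restrict_chain (G - F) f = f"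
      using f(1) by (auto simp: fun_eq_iff restrict_chain_def dest: chains_onD)
    have "x = boundary S (restrict_chain F f + restrict_chain (G - F) f)"
      unfolding e by (rule f(2))
    also have "\<dots> = boundary S (restrict_chain F f) + boundary S (restrict_chain (G - F) f)"
      by (rule module_hom.add[OF module_hom_boundary])
    finally have x: "x = boundary S (restrict_chain F f) + boundary S (restrict_chain (G - F) f)" .
    have "restrict_chain F f \<in> chains_on F"
      using restrict_chain_in_chains_on[OF f(1), of F] chains_on_mono[of "F \<inter> (F \<union> G)" F] by blast
    moreover have "restrict_chain (G - F) f \<in> chains_on G"
      using restrict_chain_in_chains_on[OF f(1), of "G - F"] chains_on_mono[of "(G - F) \<inter> (F \<union> G)" G]
      by blast
    ultimately show "x \<in> Chains.span (boundary S ` chains_on F \<union> boundary S ` chains_on G)"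
      unfolding x by (intro Chains.span_add Chains.span_base) auto
  qed
qed (use assms in auto)

lemma boundary_rank_Un_ge:
  fixes K :: "'k::field itself" and S :: "'a::linorder set"
  assumes S: "finite S" "F \<subseteq> Pow S" "G \<subseteq> Pow S"
    and card: "\<forall>\<sigma>\<in>F. card \<sigma> < m" "\<forall>\<sigma>\<in>G. card \<sigma> = m"
  shows "boundary_rank K S F + boundary_rank K S G \<le> boundary_rank K S (F \<union> G)"
proof -
  let ?P = "restrict_chain {\<tau>. card \<tau> + 1 = m} :: ('a set \<Rightarrow> 'k) \<Rightarrow> _"
  let ?X = "boundary S ` chains_on F :: ('a set \<Rightarrow> 'k) set"
  let ?Y = "boundary S ` chains_on G :: ('a set \<Rightarrow> 'k) set"
  have FG: "F \<union> G \<subseteq> Pow S" using S(2,3) by blast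
  note fin = finite_subset_Pow[OF S(1) FG]
  have facet: "card \<tau> + 1 = card (insert v \<tau>)" if "v \<notin> \<tau>" "insert v \<tau> \<in> F \<union> G" for v \<tau>
  proof -
    have "finite (insert v \<tau>)" using fin(2) that(2) .
    then show ?thesis using that(1) by simp
  qed
  have proj_X: "?P x = 0" if x: "x \<in> ?X" for x
  proof -
    obtain f where f: "f \<in> chains_on F" "x = boundary S f" using x by blast
    have "{\<tau>. card \<tau> + 1 = m} \<inter> {\<tau>. \<exists>v. v \<notin> \<tau> \<and> insert v \<tau> \<in> F} = {}"
      using facet card(1) by fastforce
    with boundary_in_chains_on_facets[OF f(1)] show ?thesis unfolding f(2) by (rule restrict_chain_eq_0)
  qed
  have proj_Y: "?P y = y" if y: "y \<in> ?Y" for y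
  proof -
    obtain f where f: "f \<in> chains_on G" "y = boundary S f" using y by blast
    have "{\<tau>. \<exists>v. v \<notin> \<tau> \<and> insert v \<tau> \<in> G} \<subseteq> {\<tau>. card \<tau> + 1 = m}"
      using facet card(2) by fastforce
    with boundary_in_chains_on_facets[OF f(1)] show ?thesis
      unfolding f(2) by (intro restrict_chain_id) (rule subsetD[OF chains_on_mono])
  qed
  have "Chains.dim ?X + Chains.dim (?P ` ?Y)
      \<le> Chains.dim (boundary S ` chains_on (F \<union> G) :: ('a set \<Rightarrow> 'k) set)"
  proof (rule Chains.dim_add_dim_image_le[OF module_hom_restrict_chain])
    show "finitely_spanned chain_scale (boundary S ` chains_on (F \<union> G) :: ('a set \<Rightarrow> 'k) set)"
      by (rule finitely_spanned_boundary_image[OF fin(1)])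
    show "?X \<subseteq> boundary S ` chains_on (F \<union> G)" "?Y \<subseteq> boundary S ` chains_on (F \<union> G)"
      by (intro image_mono chains_on_mono; blast)+
  qed (rule proj_X)
  moreover have "?P ` ?Y = ?Y" using proj_Y by force
  ultimately show ?thesis unfolding boundary_rank_def by simp
qed

lemma boundary_rank_eq_sum:
  fixes K :: "'k::field itself" and S :: "'a::linorder set"
  assumes "finite S" "F \<subseteq> Pow S"
  shows "boundary_rank K S F = (\<Sum>k\<le>card S. boundary_rank K S {\<sigma>\<in>F. card \<sigma> = k})"
proof -
  have "boundary_rank K S {\<sigma>\<in>F. card \<sigma> < m} = (\<Sum>k<m. boundary_rank K S {\<sigma>\<in>F. card \<sigma> = k})" for m
  proof (induction m)
    case 0
    then show ?case by (simp add: boundary_rank_eq_0)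
  next
    case (Suc m)
    have fin: "finite {\<sigma>\<in>F. card \<sigma> < m}" "finite {\<sigma>\<in>F. card \<sigma> = m}"
      using assms by (auto intro: finite_subset)
    have "{\<sigma>\<in>F. card \<sigma> < Suc m} = {\<sigma>\<in>F. card \<sigma> < m} \<union> {\<sigma>\<in>F. card \<sigma> = m}" by auto
    moreover have "boundary_rank K S {\<sigma>\<in>F. card \<sigma> < m} + boundary_rank K S {\<sigma>\<in>F. card \<sigma> = m}
        \<le> boundary_rank K S ({\<sigma>\<in>F. card \<sigma> < m} \<union> {\<sigma>\<in>F. card \<sigma> = m})"
      by (rule boundary_rank_Un_ge[OF assms(1)]) (use assms(2) in auto)
    ultimately have "boundary_rank K S {\<sigma>\<in>F. card \<sigma> < Suc m}
        = boundary_rank K S {\<sigma>\<in>F. card \<sigma> < m} + boundary_rank K S {\<sigma>\<in>F. card \<sigma> = m}"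
      using boundary_rank_Un_le[OF fin, of K S] by simp
    then show ?case using Suc.IH by simp
  qed
  from this[of "Suc (card S)"] have "boundary_rank K S {\<sigma>\<in>F. card \<sigma> < Suc (card S)}
      = (\<Sum>k\<le>card S. boundary_rank K S {\<sigma>\<in>F. card \<sigma> = k})"
    by (simp only: lessThan_Suc_atMost)
  moreover have "card \<sigma> \<le> card S" if "\<sigma> \<in> F" for \<sigma>
    using card_mono[OF assms(1)] that assms(2) by blast
  then have "{\<sigma>\<in>F. card \<sigma> < Suc (card S)} = F" by (auto simp: less_Suc_eq_le)
  ultimately show ?thesis by simp
qed

lemma sum_diff_shift_eq:
  fixes z b :: "nat \<Rightarrow> nat"
  assumes "\<And>k. b (Suc k) \<le> z k" "b 0 = 0"
  shows "int (\<Sum>k\<le>n. z k - b (Suc k))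
    = int (\<Sum>k\<le>n. z k + b k) - 2 * int (\<Sum>k\<le>n. b k) - int (b (Suc n))"
proof (induction n)
  case (Suc n)
  have "int (z (Suc n) - b (Suc (Suc n))) = int (z (Suc n)) - int (b (Suc (Suc n)))"
    using assms(1)[of "Suc n"] by simp
  then show ?case using Suc.IH by simp
qed (use assms in simp)

lemma total_reduced_betti_eq:
  fixes K :: "'k::field itself" and S :: "'a::linorder set"
  assumes S: "finite S" "F \<subseteq> Pow S" and dc: "down_closed F"
  shows "int (\<Sum>k\<le>card S. reduced_betti K S F k) = int (card F) - 2 * int (boundary_rank K S F)"
proof -
  define z where "z k = cycle_dim K S {\<sigma>\<in>F. card \<sigma> = k}" for k
  define b where "b k = boundary_rank K S {\<sigma>\<in>F. card \<sigma> = k}" for k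
  have finF: "finite F" using S by (meson finite_Pow_iff rev_finite_subset)
  have card_le: "card \<sigma> \<le> card S" if "\<sigma> \<in> F" for \<sigma> using that S by (auto intro: card_mono)
  have "card F = (\<Sum>\<sigma>\<in>F. 1 :: nat)" by simp
  also have "\<dots> = (\<Sum>k\<le>card S. \<Sum>\<sigma>\<in>{\<sigma>\<in>F. card \<sigma> = k}. 1)"
    by (rule sum.group[symmetric, OF finF finite_atMost]) (use card_le in blast)
  also have "\<dots> = (\<Sum>k\<le>card S. card {\<sigma>\<in>F. card \<sigma> = k})" by simp
  also have "\<dots> = (\<Sum>k\<le>card S. z k + b k)"
    unfolding z_def b_def using finF by (intro sum.cong refl card_eq_cycle_dim_add_boundary_rank) auto
  finally have cardF: "card F = (\<Sum>k\<le>card S. z k + b k)" .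
  have b0: "b 0 = 0"
    unfolding b_def by (rule boundary_rank_eq_0) (use finite_subset_Pow(2)[OF S] in auto)
  have bn: "b (Suc (card S)) = 0"
    unfolding b_def by (rule boundary_rank_eq_0) (use card_le in fastforce)
  have "int (\<Sum>k\<le>card S. reduced_betti K S F k) = int (\<Sum>k\<le>card S. z k - b (Suc k))"
    unfolding reduced_betti_eq z_def b_def ..
  also have "\<dots> = int (\<Sum>k\<le>card S. z k + b k) - 2 * int (\<Sum>k\<le>card S. b k) - int (b (Suc (card S)))"
  proof (rule sum_diff_shift_eq[where b = b, OF _ b0])
    show "b (Suc k) \<le> z k" for k unfolding b_def z_def by (rule boundary_rank_le_cycle_dim[OF S dc])
  qed
  also have "\<dots> = int (card F) - 2 * int (\<Sum>k\<le>card S. b k)"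
    unfolding cardF bn by simp
  finally show ?thesis unfolding boundary_rank_eq_sum[OF S, of K] b_def .
qed

lemma Ind_subset_Pow: "Ind E S \<subseteq> Pow S"
  unfolding Ind_def by auto

lemma down_closed_Ind: "down_closed (Ind E S)"
  unfolding Ind_def down_closed_def by blast

lemma btilde_eq:
  fixes K :: "'k::field itself" and S :: "'a::linorder set"
  assumes "finite S"
  shows "int (btilde K E S) = int (card (Ind E S)) - 2 * int (boundary_rank K S (Ind E S))"
  unfolding btilde_def by (rule total_reduced_betti_eq[OF assms Ind_subset_Pow down_closed_Ind])

lemma boundary_rank_superset:
  fixes K :: "'k::field itself" and S :: "'a::linorder set"
  assumes "finite S" "T \<subseteq> S" "F \<subseteq> Pow T"
  shows "boundary_rank K S F = boundary_rank K T F"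
proof -
  have "boundary S f = boundary T f" if "f \<in> chains_on F" for f :: "'a set \<Rightarrow> 'k"
    by (rule boundary_eq_boundary_subset[OF that _ assms(2,1)]) (use assms(3) in blast)
  then show ?thesis unfolding boundary_rank_def by (metis (no_types, lifting) image_cong)
qed

definition cone_chain :: "'a::linorder \<Rightarrow> ('a set \<Rightarrow> 'k::field) \<Rightarrow> ('a set \<Rightarrow> 'k)" where
  "cone_chain v g = (\<lambda>\<sigma>. if v \<in> \<sigma> then insertion_sign (\<sigma> - {v}) v * g (\<sigma> - {v}) else 0)"

lemma module_hom_neg_cone_chain:
  "module_hom chain_scale chain_scale (\<lambda>g. - cone_chain v g :: 'a::linorder set \<Rightarrow> 'k::field)"
  by (rule module_hom_chainI) (auto simp: cone_chain_def fun_eq_iff chain_scale_apply algebra_simps)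

lemma cone_chain_in_chains_on:
  assumes "g \<in> chains_on Q" "\<And>\<sigma>. \<sigma> \<in> Q \<Longrightarrow> insert v \<sigma> \<in> D"
  shows "cone_chain v g \<in> chains_on D"
proof (unfold chains_on_def, rule CollectI, intro allI impI)
  fix \<sigma> assume "cone_chain v g \<sigma> \<noteq> 0"
  then have "v \<in> \<sigma>" "g (\<sigma> - {v}) \<noteq> 0" by (auto simp: cone_chain_def split: if_splits)
  then have "insert v (\<sigma> - {v}) \<in> D" using assms chains_onD by blast
  then show "\<sigma> \<in> D" using \<open>v \<in> \<sigma>\<close> by (simp add: insert_absorb)
qed

lemma inj_on_neg_cone_chain:
  assumes "\<And>\<sigma>. \<sigma> \<in> Q \<Longrightarrow> v \<notin> \<sigma>"
  shows "inj_on (\<lambda>g. - cone_chain v g :: 'a::linorder set \<Rightarrow> 'k::field) (chains_on Q)"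
proof (rule inj_onI, rule ext)
  fix g h :: "'a set \<Rightarrow> 'k" and \<sigma>
  assume g: "g \<in> chains_on Q" and h: "h \<in> chains_on Q" and gh: "- cone_chain v g = - cone_chain v h"
  show "g \<sigma> = h \<sigma>"
  proof (cases "\<sigma> \<in> Q")
    case True
    then have "insert v \<sigma> - {v} = \<sigma>" using assms by auto
    moreover have "cone_chain v g (insert v \<sigma>) = cone_chain v h (insert v \<sigma>)" using gh by simp
    ultimately show ?thesis by (simp add: cone_chain_def)
  next
    case False
    then show ?thesis using chains_onD[OF g] chains_onD[OF h] by metis
  qed
qed

lemma insertion_sign_insert_insert:
  assumes "finite \<rho>" "v \<notin> \<rho>" "w \<notin> \<rho>" "v \<noteq> w"
  shows "insertion_sign (insert v \<rho>) w * insertion_sign (insert w \<rho>) v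
    = - (insertion_sign \<rho> v * insertion_sign \<rho> w :: 'k::field)"
  unfolding card_less_insert[OF assms(1,2)] card_less_insert[OF assms(1,3)]
  using assms(4) by (cases v w rule: linorder_cases) (auto simp: power_add)

lemma restrict_boundary_cone_chain:
  fixes g :: "'a::linorder set \<Rightarrow> 'k::field"
  assumes S: "finite S" "S' \<subseteq> S" "v \<in> S" "v \<notin> S'"
    and g: "g \<in> chains_on Q" "Q \<subseteq> Pow S'"
  shows "restrict_chain {\<sigma>. v \<in> \<sigma>} (boundary S (cone_chain v g)) = - cone_chain v (boundary S' g)"
proof
  fix \<tau>
  show "restrict_chain {\<sigma>. v \<in> \<sigma>} (boundary S (cone_chain v g)) \<tau> = (- cone_chain v (boundary S' g)) \<tau>"
  proof (cases "v \<in> \<tau>")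
    case False
    then show ?thesis by (simp add: restrict_chain_def cone_chain_def)
  next
    case True
    define \<rho> where "\<rho> = \<tau> - {v}"
    have \<tau>: "\<tau> = insert v \<rho>" "v \<notin> \<rho>" using True unfolding \<rho>_def by auto
    have g0: "g (insert w \<rho>) = 0" if "w \<notin> S'" for w
      using that g chains_onD by blast
    have "restrict_chain {\<sigma>. v \<in> \<sigma>} (boundary S (cone_chain v g)) \<tau> = boundary S (cone_chain v g) \<tau>"
      using True by (simp add: restrict_chain_def)
    also have "\<dots> = (\<Sum>w\<in>S - \<tau>. insertion_sign \<tau> w * (insertion_sign (insert w \<rho>) v * g (insert w \<rho>)))"
      unfolding boundary_apply by (rule sum.cong) (use \<tau> in \<open>auto simp: cone_chain_def insert_Diff_if\<close>)
    also have "\<dots> = (\<Sum>w\<in>S' - \<rho>. insertion_sign \<tau> w * (insertion_sign (insert w \<rho>) v * g (insert w \<rho>)))"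
      by (rule sum.mono_neutral_right) (use S \<tau> g0 in auto)
    also have "\<dots> = (\<Sum>w\<in>S' - \<rho>. - (insertion_sign \<rho> v * (insertion_sign \<rho> w * g (insert w \<rho>))))"
    proof (rule sum.cong[OF refl])
      fix w assume w: "w \<in> S' - \<rho>"
      show "insertion_sign \<tau> w * (insertion_sign (insert w \<rho>) v * g (insert w \<rho>))
          = - (insertion_sign \<rho> v * (insertion_sign \<rho> w * g (insert w \<rho>)))"
      proof (cases "g (insert w \<rho>) = 0")
        case False
        then have "insert w \<rho> \<subseteq> S'" using g chains_onD by blast
        then have "finite \<rho>" using S by (meson finite_insert rev_finite_subset)
        then have "insertion_sign (insert v \<rho>) w * insertion_sign (insert w \<rho>) v
            = - (insertion_sign \<rho> v * insertion_sign \<rho> w :: 'k)"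
          by (rule insertion_sign_insert_insert) (use w S \<tau> in auto)
        then show ?thesis unfolding \<tau>(1) by (simp add: algebra_simps)
      qed simp
    qed
    also have "\<dots> = (- cone_chain v (boundary S' g)) \<tau>"
      using True by (simp add: cone_chain_def boundary_apply sum_distrib_left sum_negf \<rho>_def)
    finally show ?thesis .
  qed
qed

lemma Ind_delete_vertex_eq: "Ind E (S - {v}) = {\<sigma> \<in> Ind E S. v \<notin> \<sigma>}"
  unfolding Ind_def by auto

lemma insert_in_Ind_link:
  assumes "simple_graph V E" "v \<in> S" "\<sigma> \<in> Ind E (S - closed_nbhd S E v)"
  shows "insert v \<sigma> \<in> Ind E S"
  using assms unfolding simple_graph_def Ind_def closed_nbhd_def by blast

lemma Diff_vertex_in_Ind_link:
  assumes "\<sigma> \<in> Ind E S" "v \<in> \<sigma>"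
  shows "\<sigma> - {v} \<in> Ind E (S - closed_nbhd S E v)"
  using assms unfolding Ind_def closed_nbhd_def by blast

lemma card_Ind_delete_vertex:
  assumes "simple_graph V E" "finite S" "v \<in> S"
  shows "card (Ind E S) = card (Ind E (S - {v})) + card (Ind E (S - closed_nbhd S E v))"
proof -
  let ?A = "Ind E (S - {v})" and ?Q = "Ind E (S - closed_nbhd S E v)"
  have vQ: "v \<notin> \<sigma>" if "\<sigma> \<in> ?Q" for \<sigma> using that unfolding Ind_def closed_nbhd_def by blast
  have "Ind E S = ?A \<union> insert v ` ?Q"
  proof
    show "Ind E S \<subseteq> ?A \<union> insert v ` ?Q"
    proof
      fix \<sigma> assume \<sigma>: "\<sigma> \<in> Ind E S"
      show "\<sigma> \<in> ?A \<union> insert v ` ?Q"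
      proof (cases "v \<in> \<sigma>")
        case True
        have "\<sigma> = insert v (\<sigma> - {v})" using True by auto
        then show ?thesis using Diff_vertex_in_Ind_link[OF \<sigma> True] by (intro UnI2 image_eqI)
      next
        case False
        then show ?thesis using \<sigma> by (simp add: Ind_delete_vertex_eq)
      qed
    qed
    have "?A \<subseteq> Ind E S" by (simp add: Ind_delete_vertex_eq)
    moreover have "insert v ` ?Q \<subseteq> Ind E S" using insert_in_Ind_link[OF assms(1,3)] by blast
    ultimately show "?A \<union> insert v ` ?Q \<subseteq> Ind E S" by (rule Un_least)
  qed
  moreover have "?A \<inter> insert v ` ?Q = {}" by (auto simp: Ind_delete_vertex_eq)
  moreover have "inj_on (insert v) ?Q" by (rule inj_onI) (metis Diff_insert_absorb vQ)
  moreover have "finite ?A" "finite ?Q"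
    using assms(2) finite_subset_Pow(1)[OF _ Ind_subset_Pow] by blast+
  ultimately show ?thesis by (simp add: card_Un_disjoint card_image)
qed

lemma dim_restrict_boundary_cone_chains:
  fixes K :: "'k::field itself" and S :: "'a::linorder set"
  assumes S: "finite S" "S' \<subseteq> S" "v \<in> S" "v \<notin> S'" and Q: "Q \<subseteq> Pow S'" "down_closed Q"
  shows "Chains.dim (restrict_chain {\<sigma>. v \<in> \<sigma>} ` boundary S ` cone_chain v ` chains_on Q :: ('a set \<Rightarrow> 'k) set)
    = boundary_rank K S' Q"
proof -
  let ?Z = "boundary S' ` chains_on Q :: ('a set \<Rightarrow> 'k) set"
  have finQ: "finite Q" using finite_subset_Pow(1)[OF rev_finite_subset[OF S(1,2)] Q(1)] .
  have "restrict_chain {\<sigma>. v \<in> \<sigma>} ` boundary S ` cone_chain v ` chains_on Q = (\<lambda>g. - cone_chain v g) ` ?Z"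
    unfolding image_image by (intro image_cong refl restrict_boundary_cone_chain[OF S _ Q(1)])
  moreover have "Chains.dim ((\<lambda>g. - cone_chain v g) ` ?Z) = Chains.dim ?Z"
  proof (rule Chains.dim_image_inj_on[OF module_hom_neg_cone_chain])
    show "finitely_spanned chain_scale ?Z" by (rule finitely_spanned_boundary_image[OF finQ])
    show "Chains.subspace ?Z"
      by (rule module_hom.subspace_image[OF module_hom_boundary chains_on_subspace])
    have "inj_on (\<lambda>g. - cone_chain v g) (chains_on Q :: ('a set \<Rightarrow> 'k) set)"
      by (rule inj_on_neg_cone_chain) (use Q(1) S(4) in blast)
    moreover have "?Z \<subseteq> chains_on Q" using boundary_in_chains_on[OF Q(2)] by blast
    ultimately show "inj_on (\<lambda>g. - cone_chain v g) ?Z" by (rule inj_on_subset)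
  qed
  ultimately show ?thesis unfolding boundary_rank_def by simp
qed

text \<open>Boundaries of faces avoiding \<open>v\<close> vanish on faces through \<open>v\<close>, while the cones over the
  link faces contribute there a copy of the boundary of the link.\<close>

lemma boundary_rank_delete_vertex:
  fixes K :: "'k::field itself" and S :: "'a::linorder set"
  assumes G: "simple_graph V E" "finite S" "v \<in> S"
  shows "boundary_rank K (S - {v}) (Ind E (S - {v}))
      + boundary_rank K (S - closed_nbhd S E v) (Ind E (S - closed_nbhd S E v))
    \<le> boundary_rank K S (Ind E S)"
proof -
  define S' where "S' = S - closed_nbhd S E v"
  let ?D = "Ind E S" and ?A = "Ind E (S - {v})" and ?Q = "Ind E S'"
  let ?P = "restrict_chain {\<sigma>. v \<in> \<sigma>} :: ('a set \<Rightarrow> 'k) \<Rightarrow> _"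
  let ?X = "boundary S ` chains_on ?A :: ('a set \<Rightarrow> 'k) set"
  have S': "S' \<subseteq> S" "v \<notin> S'" unfolding S'_def closed_nbhd_def by auto
  have proj_X: "?P x = 0" if x: "x \<in> ?X" for x
  proof -
    obtain f where f: "f \<in> chains_on ?A" "x = boundary S f" using x by blast
    have "{\<sigma>. v \<in> \<sigma>} \<inter> {\<tau>. \<exists>u. u \<notin> \<tau> \<and> insert u \<tau> \<in> ?A} = {}"
      by (auto simp: Ind_delete_vertex_eq)
    with boundary_in_chains_on_facets[OF f(1)] show ?thesis unfolding f(2) by (rule restrict_chain_eq_0)
  qed
  have "Chains.dim ?X + Chains.dim (?P ` boundary S ` cone_chain v ` chains_on ?Q)
      \<le> Chains.dim (boundary S ` chains_on ?D :: ('a set \<Rightarrow> 'k) set)"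
  proof (rule Chains.dim_add_dim_image_le[OF module_hom_restrict_chain _ _ _ proj_X])
    show "finitely_spanned chain_scale (boundary S ` chains_on ?D :: ('a set \<Rightarrow> 'k) set)"
      using G(2) by (intro finitely_spanned_boundary_image finite_subset_Pow(1)[OF _ Ind_subset_Pow])
    show "?X \<subseteq> boundary S ` chains_on ?D"
      by (intro image_mono chains_on_mono) (simp add: Ind_delete_vertex_eq)
    have "insert v \<sigma> \<in> ?D" if "\<sigma> \<in> ?Q" for \<sigma>
      using insert_in_Ind_link[OF G(1,3)] that unfolding S'_def .
    then show "boundary S ` cone_chain v ` chains_on ?Q \<subseteq> boundary S ` chains_on ?D"
      using cone_chain_in_chains_on by (intro image_mono) blast
  qed
  moreover have "Chains.dim (?P ` boundary S ` cone_chain v ` chains_on ?Q) = boundary_rank K S' ?Q"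
    by (rule dim_restrict_boundary_cone_chains[OF G(2) S'(1) G(3) S'(2) Ind_subset_Pow down_closed_Ind])
  moreover have "boundary_rank K S ?A = boundary_rank K (S - {v}) ?A"
    by (rule boundary_rank_superset[OF G(2) _ Ind_subset_Pow]) blast
  ultimately show ?thesis unfolding boundary_rank_def S'_def[symmetric] by simp
qed

lemma btilde_delete_vertex_le:
  assumes "simple_graph V E" "finite S" "v \<in> S"
  shows "btilde K E S \<le> btilde K E (S - {v}) + btilde K E (S - closed_nbhd S E v)"
  using btilde_eq[OF assms(2), of K E] btilde_eq[of "S - {v}" K E] btilde_eq[of "S - closed_nbhd S E v" K E]
    card_Ind_delete_vertex[OF assms] boundary_rank_delete_vertex[OF assms, of K] assms(2)
  by simp

text \<open>\<open>join_sign C \<sigma>\<close> is the sign of the shuffle that lists the vertices of \<open>\<sigma> \<inter> C\<close> before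
  those of \<open>\<sigma> - C\<close>; with it, \<open>join_chain C\<close> is the cross product of chains of the join, and
  \<open>slice_chain C G \<beta>\<close> extracts the coefficient of \<open>\<beta>\<close> from such a product.\<close>

definition join_sign :: "'a::linorder set \<Rightarrow> 'a set \<Rightarrow> 'k::field" where
  "join_sign C \<sigma> = (- 1) ^ card {p \<in> (\<sigma> \<inter> C) \<times> (\<sigma> - C). snd p < fst p}"

definition join_chain :: "'a::linorder set \<Rightarrow> ('a set \<Rightarrow> 'k::field) \<Rightarrow> ('a set \<Rightarrow> 'k) \<Rightarrow> ('a set \<Rightarrow> 'k)" where
  "join_chain C f g = (\<lambda>\<sigma>. join_sign C \<sigma> * f (\<sigma> \<inter> C) * g (\<sigma> - C))"

definition slice_chain :: "'a::linorder set \<Rightarrow> 'a set \<Rightarrow> 'a set \<Rightarrow> ('a set \<Rightarrow> 'k::field) \<Rightarrow> ('a set \<Rightarrow> 'k)" where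
  "slice_chain C G \<beta> h = (\<lambda>\<gamma>. if \<gamma> \<subseteq> G then join_sign C (\<beta> \<union> \<gamma>) * h (\<beta> \<union> \<gamma>) else 0)"

lemma card_pairs_insert_left:
  fixes X :: "'a::linorder set"
  assumes "finite X" "finite Y" "v \<notin> X"
  shows "card {p \<in> insert v X \<times> Y. snd p < fst p} = card {p \<in> X \<times> Y. snd p < fst p} + card {b \<in> Y. b < v}"
proof -
  have "{p \<in> insert v X \<times> Y. snd p < fst p} = {p \<in> X \<times> Y. snd p < fst p} \<union> Pair v ` {b \<in> Y. b < v}"
    by auto
  moreover have "{p \<in> X \<times> Y. snd p < fst p} \<inter> Pair v ` {b \<in> Y. b < v} = {}" using assms(3) by auto
  moreover have "card (Pair v ` {b \<in> Y. b < v}) = card {b \<in> Y. b < v}"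
    by (rule card_image) (auto intro: inj_onI)
  ultimately show ?thesis using assms(1,2) by (simp add: card_Un_disjoint)
qed

lemma card_pairs_insert_right:
  fixes X :: "'a::linorder set"
  assumes "finite X" "finite Y" "v \<notin> Y"
  shows "card {p \<in> X \<times> insert v Y. snd p < fst p} = card {p \<in> X \<times> Y. snd p < fst p} + card {a \<in> X. v < a}"
proof -
  have "{p \<in> X \<times> insert v Y. snd p < fst p} = {p \<in> X \<times> Y. snd p < fst p} \<union> (\<lambda>a. (a, v)) ` {a \<in> X. v < a}"
    by auto
  moreover have "{p \<in> X \<times> Y. snd p < fst p} \<inter> (\<lambda>a. (a, v)) ` {a \<in> X. v < a} = {}" using assms(3) by auto
  moreover have "card ((\<lambda>a. (a, v)) ` {a \<in> X. v < a}) = card {a \<in> X. v < a}"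
    by (rule card_image) (auto intro: inj_onI)
  ultimately show ?thesis using assms(1,2) by (simp add: card_Un_disjoint)
qed

lemma join_sign_insert_left:
  assumes "finite (\<sigma> \<inter> C)" "finite (\<sigma> - C)" "v \<in> C" "v \<notin> \<sigma>"
  shows "join_sign C (insert v \<sigma>) = join_sign C \<sigma> * (- 1) ^ card {b \<in> \<sigma> - C. b < v}"
proof -
  have "insert v \<sigma> \<inter> C = insert v (\<sigma> \<inter> C)" "insert v \<sigma> - C = \<sigma> - C" using assms(3) by auto
  then show ?thesis unfolding join_sign_def using card_pairs_insert_left[OF assms(1,2)] assms(4)
    by (simp add: power_add)
qed

lemma join_sign_insert_right:
  assumes "finite (\<sigma> \<inter> C)" "finite (\<sigma> - C)" "v \<notin> C" "v \<notin> \<sigma>"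
  shows "join_sign C (insert v \<sigma>) = join_sign C \<sigma> * (- 1) ^ card {a \<in> \<sigma> \<inter> C. v < a}"
proof -
  have "insert v \<sigma> \<inter> C = \<sigma> \<inter> C" "insert v \<sigma> - C = insert v (\<sigma> - C)" using assms(3) by auto
  then show ?thesis unfolding join_sign_def using card_pairs_insert_right[OF assms(1,2)] assms(4)
    by (simp add: power_add)
qed

lemma insertion_sign_Int_Diff:
  assumes "finite (\<sigma> \<inter> C)" "finite (\<sigma> - C)"
  shows "insertion_sign \<sigma> v = (insertion_sign (\<sigma> \<inter> C) v * insertion_sign (\<sigma> - C) v :: 'k::field)"
proof -
  have "{u \<in> \<sigma>. u < v} = {u \<in> \<sigma> \<inter> C. u < v} \<union> {u \<in> \<sigma> - C. u < v}" by auto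
  moreover have "card ({u \<in> \<sigma> \<inter> C. u < v} \<union> {u \<in> \<sigma> - C. u < v})
      = card {u \<in> \<sigma> \<inter> C. u < v} + card {u \<in> \<sigma> - C. u < v}"
    by (rule card_Un_disjoint) (use assms in \<open>auto intro: finite_subset[of _ "\<sigma> \<inter> C"] finite_subset[of _ "\<sigma> - C"]\<close>)
  ultimately show ?thesis by (simp add: power_add)
qed

lemma card_less_add_card_greater:
  fixes X :: "'a::linorder set"
  assumes "finite X" "v \<notin> X"
  shows "card {a \<in> X. a < v} + card {a \<in> X. v < a} = card X"
proof -
  have "x < v \<or> v < x" if "x \<in> X" for x using assms(2) that by (cases x v rule: linorder_cases) auto
  then have "X = {a \<in> X. a < v} \<union> {a \<in> X. v < a}" by blast
  then have "card X = card ({a \<in> X. a < v} \<union> {a \<in> X. v < a})" by simp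
  also have "\<dots> = card {a \<in> X. a < v} + card {a \<in> X. v < a}"
    by (rule card_Un_disjoint) (use assms(1) in auto)
  finally show ?thesis by simp
qed

lemma boundary_join_chain_left:
  fixes f g :: "'a::linorder set \<Rightarrow> 'k::field"
  assumes CG: "C \<inter> G = {}" "finite C" "finite G"
    and f: "\<And>\<alpha>. f \<alpha> \<noteq> 0 \<Longrightarrow> \<alpha> \<subseteq> C" and g: "\<And>\<beta>. g \<beta> \<noteq> 0 \<Longrightarrow> \<beta> \<subseteq> G"
  shows "(\<Sum>v\<in>C - \<tau>. insertion_sign \<tau> v * join_chain C f g (insert v \<tau>))
    = join_chain C (boundary (C \<union> G) f) g \<tau>"
proof (cases "g (\<tau> - C) = 0")
  case True
  moreover have "insert v \<tau> - C = \<tau> - C" if "v \<in> C" for v using that by auto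
  ultimately show ?thesis by (simp add: join_chain_def)
next
  case False
  have fin: "finite (\<tau> \<inter> C)" "finite (\<tau> - C)"
    using CG(2,3) g[OF False] by (auto intro: rev_finite_subset)
  have "(\<Sum>v\<in>C - \<tau>. insertion_sign \<tau> v * join_chain C f g (insert v \<tau>))
      = (\<Sum>v\<in>C - \<tau>. join_sign C \<tau> * (insertion_sign (\<tau> \<inter> C) v * f (insert v (\<tau> \<inter> C))) * g (\<tau> - C))"
  proof (rule sum.cong[OF refl])
    fix v assume v: "v \<in> C - \<tau>"
    have e: "insert v \<tau> \<inter> C = insert v (\<tau> \<inter> C)" "insert v \<tau> - C = \<tau> - C" using v by auto
    have "join_sign C (insert v \<tau>) = join_sign C \<tau> * (insertion_sign (\<tau> - C) v :: 'k)"
      by (rule join_sign_insert_left[OF fin]) (use v in auto)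
    then have key: "join_sign C (insert v \<tau>) * insertion_sign (\<tau> - C) v = (join_sign C \<tau> :: 'k)"
      by (simp add: mult.assoc)
    show "insertion_sign \<tau> v * join_chain C f g (insert v \<tau>)
        = join_sign C \<tau> * (insertion_sign (\<tau> \<inter> C) v * f (insert v (\<tau> \<inter> C))) * g (\<tau> - C)"
      unfolding join_chain_def e insertion_sign_Int_Diff[OF fin, of v] key[symmetric]
      by (simp only: ac_simps)
  qed
  also have "\<dots> = join_sign C \<tau> * boundary (C \<union> G) f (\<tau> \<inter> C) * g (\<tau> - C)"
  proof -
    have "(\<Sum>v\<in>C - \<tau>. insertion_sign (\<tau> \<inter> C) v * f (insert v (\<tau> \<inter> C)))
        = (\<Sum>v\<in>(C \<union> G) - (\<tau> \<inter> C). insertion_sign (\<tau> \<inter> C) v * f (insert v (\<tau> \<inter> C)))"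
      by (rule sum.mono_neutral_left) (use CG f in auto)
    then show ?thesis unfolding boundary_apply
      by (simp only: sum_distrib_left[symmetric] sum_distrib_right[symmetric])
  qed
  finally show ?thesis by (simp add: join_chain_def)
qed

lemma boundary_join_chain_right:
  fixes f g :: "'a::linorder set \<Rightarrow> 'k::field"
  assumes CG: "C \<inter> G = {}" "finite C" "finite G"
    and f: "\<And>\<alpha>. f \<alpha> \<noteq> 0 \<Longrightarrow> \<alpha> \<subseteq> C \<and> card \<alpha> = k" and g: "\<And>\<beta>. g \<beta> \<noteq> 0 \<Longrightarrow> \<beta> \<subseteq> G"
  shows "(\<Sum>v\<in>G - \<tau>. insertion_sign \<tau> v * join_chain C f g (insert v \<tau>))
    = (- 1) ^ k * join_chain C f (boundary (C \<union> G) g) \<tau>"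
proof (cases "f (\<tau> \<inter> C) = 0")
  case True
  moreover have "insert v \<tau> \<inter> C = \<tau> \<inter> C" if "v \<in> G" for v using that CG(1) by auto
  ultimately show ?thesis by (simp add: join_chain_def)
next
  case False
  then have card: "card (\<tau> \<inter> C) = k" using f by blast
  have "(\<Sum>v\<in>G - \<tau>. insertion_sign \<tau> v * join_chain C f g (insert v \<tau>))
      = (\<Sum>v\<in>G - \<tau>. (- 1) ^ k * join_sign C \<tau> * f (\<tau> \<inter> C) * (insertion_sign (\<tau> - C) v * g (insert v (\<tau> - C))))"
  proof (rule sum.cong[OF refl])
    fix v assume v: "v \<in> G - \<tau>"
    have e: "insert v \<tau> \<inter> C = \<tau> \<inter> C" "insert v \<tau> - C = insert v (\<tau> - C)" using v CG(1) by auto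
    show "insertion_sign \<tau> v * join_chain C f g (insert v \<tau>)
        = (- 1) ^ k * join_sign C \<tau> * f (\<tau> \<inter> C) * (insertion_sign (\<tau> - C) v * g (insert v (\<tau> - C)))"
    proof (cases "g (insert v (\<tau> - C)) = 0")
      case False
      have fin: "finite (\<tau> \<inter> C)" "finite (\<tau> - C)"
        using CG(2,3) g[OF False] by (auto intro: rev_finite_subset)
      have vC: "v \<notin> C" "v \<notin> \<tau>" using v CG(1) by auto
      have "insertion_sign (\<tau> \<inter> C) v * (- 1) ^ card {a \<in> \<tau> \<inter> C. v < a} = ((- 1) ^ k :: 'k)"
        using card_less_add_card_greater[OF fin(1), of v] card vC by (simp add: power_add[symmetric])
      moreover have "join_sign C (insert v \<tau>) = join_sign C \<tau> * ((- 1) ^ card {a \<in> \<tau> \<inter> C. v < a} :: 'k)"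
        by (rule join_sign_insert_right[OF fin vC])
      ultimately have key: "join_sign C (insert v \<tau>) * insertion_sign (\<tau> \<inter> C) v = (- 1) ^ k * (join_sign C \<tau> :: 'k)"
        by (simp add: ac_simps)
      show ?thesis
        unfolding join_chain_def e insertion_sign_Int_Diff[OF fin, of v] key[symmetric]
        by (simp only: ac_simps)
    qed (simp add: join_chain_def e)
  qed
  also have "\<dots> = (- 1) ^ k * join_sign C \<tau> * f (\<tau> \<inter> C) * boundary (C \<union> G) g (\<tau> - C)"
  proof -
    have "(\<Sum>v\<in>G - \<tau>. insertion_sign (\<tau> - C) v * g (insert v (\<tau> - C)))
        = (\<Sum>v\<in>(C \<union> G) - (\<tau> - C). insertion_sign (\<tau> - C) v * g (insert v (\<tau> - C)))"
      by (rule sum.mono_neutral_left) (use CG g in auto)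
    then show ?thesis unfolding boundary_apply by (simp only: sum_distrib_left[symmetric])
  qed
  finally show ?thesis by (simp add: join_chain_def ac_simps)
qed

lemma boundary_join_chain:
  fixes f g :: "'a::linorder set \<Rightarrow> 'k::field"
  assumes "C \<inter> G = {}" "finite C" "finite G"
    and f: "\<And>\<alpha>. f \<alpha> \<noteq> 0 \<Longrightarrow> \<alpha> \<subseteq> C \<and> card \<alpha> = k" and g: "\<And>\<beta>. g \<beta> \<noteq> 0 \<Longrightarrow> \<beta> \<subseteq> G"
  shows "boundary (C \<union> G) (join_chain C f g)
    = join_chain C (boundary (C \<union> G) f) g + chain_scale ((- 1) ^ k) (join_chain C f (boundary (C \<union> G) g))"
proof
  fix \<tau>
  have "(C \<union> G) - \<tau> = (C - \<tau>) \<union> (G - \<tau>)" "(C - \<tau>) \<inter> (G - \<tau>) = {}" using assms(1) by auto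
  then have "boundary (C \<union> G) (join_chain C f g) \<tau>
      = (\<Sum>v\<in>C - \<tau>. insertion_sign \<tau> v * join_chain C f g (insert v \<tau>))
      + (\<Sum>v\<in>G - \<tau>. insertion_sign \<tau> v * join_chain C f g (insert v \<tau>))"
    unfolding boundary_apply using assms(2,3) by (simp add: sum.union_disjoint)
  then show "boundary (C \<union> G) (join_chain C f g) \<tau>
      = (join_chain C (boundary (C \<union> G) f) g + chain_scale ((- 1) ^ k) (join_chain C f (boundary (C \<union> G) g))) \<tau>"
    using boundary_join_chain_left[OF assms(1-3), of f g \<tau>] boundary_join_chain_right[OF assms(1-3), of f k g \<tau>]
      f g by (simp add: chain_scale_apply)
qed

lemma module_hom_slice_chain:
  "module_hom chain_scale chain_scale (slice_chain C G \<beta> :: ('a::linorder set \<Rightarrow> 'k::field) \<Rightarrow> _)"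
  by (rule module_hom_chainI) (auto simp: slice_chain_def fun_eq_iff chain_scale_apply algebra_simps)

lemma slice_join_chain:
  assumes "\<beta> \<subseteq> C" "C \<inter> G = {}" "\<And>\<gamma>. g \<gamma> \<noteq> 0 \<Longrightarrow> \<gamma> \<subseteq> G"
  shows "slice_chain C G \<beta> (join_chain C f g) = chain_scale (f \<beta>) g"
proof
  fix \<gamma>
  show "slice_chain C G \<beta> (join_chain C f g) \<gamma> = chain_scale (f \<beta>) g \<gamma>"
  proof (cases "\<gamma> \<subseteq> G")
    case True
    then have "(\<beta> \<union> \<gamma>) \<inter> C = \<beta>" "(\<beta> \<union> \<gamma>) - C = \<gamma>" using assms(1,2) by auto
    then show ?thesis using True
      by (simp add: slice_chain_def join_chain_def chain_scale_apply join_sign_def)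
  next
    case False
    then have "g \<gamma> = 0" using assms(3) by blast
    then show ?thesis using False by (simp add: slice_chain_def chain_scale_apply)
  qed
qed

lemma slice_boundary_join_unit_chain:
  fixes g :: "'a::linorder set \<Rightarrow> 'k::field"
  assumes CG: "C \<inter> G = {}" "finite C" "finite G"
    and "\<alpha> \<subseteq> C" "\<beta> \<subseteq> C" and g: "g \<in> chains_on FY" "FY \<subseteq> Pow G" "down_closed FY"
  shows "slice_chain C G \<beta> (boundary (C \<union> G) (join_chain C (unit_chain \<alpha>) g))
    = chain_scale (boundary (C \<union> G) (unit_chain \<alpha>) \<beta>) g
      + chain_scale ((- 1) ^ card \<alpha> * unit_chain \<alpha> \<beta>) (boundary (C \<union> G) g)"
proof -
  have supp: "\<gamma> \<subseteq> G" if "h \<in> chains_on FY" "h \<gamma> \<noteq> 0" for h \<gamma> using that g(2) chains_onD by blast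
  have d: "boundary (C \<union> G) (join_chain C (unit_chain \<alpha>) g)
      = join_chain C (boundary (C \<union> G) (unit_chain \<alpha>)) g
        + chain_scale ((- 1) ^ card \<alpha>) (join_chain C (unit_chain \<alpha>) (boundary (C \<union> G) g))"
    by (rule boundary_join_chain[OF CG]) (use assms(4) supp[OF g(1)] in \<open>auto simp: unit_chain_def split: if_splits\<close>)
  have "boundary (C \<union> G) g \<in> chains_on FY" by (rule boundary_in_chains_on[OF g(3,1)])
  then have "slice_chain C G \<beta> (join_chain C (unit_chain \<alpha>) (boundary (C \<union> G) g))
      = chain_scale (unit_chain \<alpha> \<beta>) (boundary (C \<union> G) g)"
    by (intro slice_join_chain[OF assms(5) CG(1)] supp)
  moreover have "slice_chain C G \<beta> (join_chain C (boundary (C \<union> G) (unit_chain \<alpha>)) g)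
      = chain_scale (boundary (C \<union> G) (unit_chain \<alpha>) \<beta>) g"
    by (intro slice_join_chain[OF assms(5) CG(1)] supp[OF g(1)])
  ultimately show ?thesis
    unfolding d module_hom.add[OF module_hom_slice_chain] module_hom.scale[OF module_hom_slice_chain]
    by (simp add: Chains.scale_scale)
qed

lemma boundary_join_unit_chain_cycle:
  fixes h :: "'a::linorder set \<Rightarrow> 'k::field"
  assumes CG: "C \<inter> G = {}" "finite C" "finite G"
    and "\<alpha> \<subseteq> C" "\<And>\<beta>. h \<beta> \<noteq> 0 \<Longrightarrow> \<beta> \<subseteq> G" "boundary (C \<union> G) h = 0"
  shows "boundary (C \<union> G) (join_chain C (unit_chain \<alpha>) h) = join_chain C (boundary (C \<union> G) (unit_chain \<alpha>)) h"
proof -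
  have "boundary (C \<union> G) (join_chain C (unit_chain \<alpha>) h)
      = join_chain C (boundary (C \<union> G) (unit_chain \<alpha>)) h
        + chain_scale ((- 1) ^ card \<alpha>) (join_chain C (unit_chain \<alpha>) (boundary (C \<union> G) h))"
    by (rule boundary_join_chain[OF CG]) (use assms(4,5) in \<open>auto simp: unit_chain_def split: if_splits\<close>)
  then show ?thesis using assms(6) by (simp add: join_chain_def chain_scale_def fun_eq_iff)
qed

lemma join_chain_in_chains_on:
  assumes "f \<in> chains_on FX" "g \<in> chains_on FY" "\<And>\<alpha> \<beta>. \<alpha> \<in> FX \<Longrightarrow> \<beta> \<in> FY \<Longrightarrow> \<alpha> \<union> \<beta> \<in> FJ"
  shows "join_chain C f g \<in> chains_on FJ"
proof (unfold chains_on_def, rule CollectI, intro allI impI)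
  fix \<sigma> assume "join_chain C f g \<sigma> \<noteq> 0"
  then have "\<sigma> \<inter> C \<in> FX" "\<sigma> - C \<in> FY"
    using chains_onD[OF assms(1)] chains_onD[OF assms(2)] by (auto simp: join_chain_def)
  then have "(\<sigma> \<inter> C) \<union> (\<sigma> - C) \<in> FJ" by (rule assms(3))
  then show "\<sigma> \<in> FJ" by (simp add: Int_Diff_Un)
qed

text \<open>The boundaries of \<open>L\<close> form a basis of the boundaries of \<open>FY\<close>, \<open>H\<close> completes them to a basis
  of the cycles of \<open>FY\<close>, and the boundaries of the faces in \<open>A\<close> form a basis of the boundaries
  of \<open>FX\<close> (only independence is assumed, which is all the argument needs).\<close>

context
  fixes C G :: "'a::linorder set" and FX FY :: "'a set set"
    and L H :: "('a set \<Rightarrow> 'k::field) set" and A :: "'a set set"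
  assumes CG: "C \<inter> G = {}" "finite C" "finite G"
    and FX: "FX \<subseteq> Pow C" "down_closed FX" and FY: "FY \<subseteq> Pow G" "down_closed FY"
    and L: "L \<subseteq> chains_on FY" "finite L" "inj_on (boundary (C \<union> G)) L"
    and H: "H \<subseteq> chains_on FY" "finite H" "\<And>h. h \<in> H \<Longrightarrow> boundary (C \<union> G) h = 0"
    and LH: "Chains.independent (boundary (C \<union> G) ` L \<union> H)" "boundary (C \<union> G) ` L \<inter> H = {}"
    and A: "A \<subseteq> FX" "finite A" "inj_on (\<lambda>\<alpha>. boundary (C \<union> G) (unit_chain \<alpha> :: 'a set \<Rightarrow> 'k)) A"
      "Chains.independent ((\<lambda>\<alpha>. boundary (C \<union> G) (unit_chain \<alpha> :: 'a set \<Rightarrow> 'k)) ` A)"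
begin

lemma slice_join_family:
  assumes \<beta>C: "\<beta> \<subseteq> C"
  shows "slice_chain C G \<beta>
      ((\<Sum>p\<in>FX \<times> L. chain_scale (a p) (boundary (C \<union> G) (join_chain C (unit_chain (fst p)) (snd p))))
       + (\<Sum>p\<in>A \<times> H. chain_scale (e p) (join_chain C (boundary (C \<union> G) (unit_chain (fst p))) (snd p))))
    = (\<Sum>p\<in>FX \<times> L. chain_scale (a p * boundary (C \<union> G) (unit_chain (fst p)) \<beta>) (snd p))
      + (\<Sum>p\<in>FX \<times> L. chain_scale (a p * ((- 1) ^ card (fst p) * unit_chain (fst p) \<beta>)) (boundary (C \<union> G) (snd p)))
      + (\<Sum>p\<in>A \<times> H. chain_scale (e p * boundary (C \<union> G) (unit_chain (fst p)) \<beta>) (snd p))"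
proof -
  let ?d = "boundary (C \<union> G) :: ('a set \<Rightarrow> 'k) \<Rightarrow> _"
  let ?sl = "slice_chain C G \<beta> :: ('a set \<Rightarrow> 'k) \<Rightarrow> _"
  note sl = module_hom_slice_chain[of C G \<beta>, where 'k = 'k]
  have "?sl (?d (join_chain C (unit_chain (fst p)) (snd p)))
      = chain_scale (?d (unit_chain (fst p)) \<beta>) (snd p)
        + chain_scale ((- 1) ^ card (fst p) * unit_chain (fst p) \<beta>) (?d (snd p))" if "p \<in> FX \<times> L" for p
  proof (rule slice_boundary_join_unit_chain[OF CG _ \<beta>C _ FY])
    show "fst p \<subseteq> C" "snd p \<in> chains_on FY" using that FX L(1) by (auto simp: mem_Times_iff)
  qed
  moreover have "?sl (join_chain C (?d (unit_chain (fst p))) (snd p))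
      = chain_scale (?d (unit_chain (fst p)) \<beta>) (snd p)" if "p \<in> A \<times> H" for p
  proof (rule slice_join_chain[OF \<beta>C CG(1)])
    show "\<gamma> \<subseteq> G" if "snd p \<gamma> \<noteq> 0" for \<gamma>
      using chains_onD[of "snd p" FY \<gamma>] that \<open>p \<in> A \<times> H\<close> H(1) FY(1) by (auto simp: mem_Times_iff)
  qed
  ultimately show ?thesis
    unfolding module_hom.add[OF sl] module_hom.sum[OF sl] module_hom.scale[OF sl]
    by (simp add: Chains.scale_right_distrib Chains.scale_scale sum.distrib add.assoc)
qed

lemma join_family_slice_coeffs_eq_0:
  assumes sum0: "(\<Sum>p\<in>FX \<times> L. chain_scale (a p) (boundary (C \<union> G) (join_chain C (unit_chain (fst p)) (snd p))))
      + (\<Sum>p\<in>A \<times> H. chain_scale (e p) (join_chain C (boundary (C \<union> G) (unit_chain (fst p))) (snd p))) = 0"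
    and \<beta>: "\<beta> \<in> FX"
  shows "\<forall>l\<in>L. a (\<beta>, l) = 0" "\<forall>h\<in>H. (\<Sum>\<alpha>\<in>A. e (\<alpha>, h) * boundary (C \<union> G) (unit_chain \<alpha>) \<beta>) = 0"
proof -
  let ?d = "boundary (C \<union> G) :: ('a set \<Rightarrow> 'k) \<Rightarrow> _"
  let ?sl = "slice_chain C G \<beta> :: ('a set \<Rightarrow> 'k) \<Rightarrow> _"
  have \<beta>C: "\<beta> \<subseteq> C" using \<beta> FX by blast
  have finFX: "finite FX" by (rule finite_subset_Pow(1)[OF CG(2) FX(1)])
  define x where "x = (\<Sum>p\<in>FX \<times> L. chain_scale (a p * ?d (unit_chain (fst p)) \<beta>) (snd p))"
  define y where "y = (\<Sum>p\<in>FX \<times> L. chain_scale (a p * ((- 1) ^ card (fst p) * unit_chain (fst p) \<beta>)) (?d (snd p)))"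
  define z where "z = (\<Sum>p\<in>A \<times> H. chain_scale (e p * ?d (unit_chain (fst p)) \<beta>) (snd p))"
  have "0 = ?sl ((\<Sum>p\<in>FX \<times> L. chain_scale (a p) (?d (join_chain C (unit_chain (fst p)) (snd p))))
      + (\<Sum>p\<in>A \<times> H. chain_scale (e p) (join_chain C (?d (unit_chain (fst p))) (snd p))))"
    unfolding sum0 by (rule module_hom.zero[OF module_hom_slice_chain, symmetric])
  also have "\<dots> = x + y + z" unfolding x_def y_def z_def by (rule slice_join_family[OF \<beta>C])
  finally have xyz: "x + y + z = 0" by simp
  have "x \<in> Chains.span L" "y \<in> Chains.span (?d ` L)" "z \<in> Chains.span H"
    unfolding x_def y_def z_def
    by (rule Chains.span_sum, rule Chains.span_scale, rule Chains.span_base, force)+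
  note yz = Chains.span_lift_boundaries_cycles_add_eq_0[OF module_hom_boundary L(2,3) _ H(2,3) LH this xyz]
  have dd: "?d (?d l) = 0" if "l \<in> L" for l
    using boundary_boundary_chains_on[of "C \<union> G" FY l] CG FY(1) L(1) that by blast
  have "y = (\<Sum>l\<in>L. chain_scale (a (\<beta>, l) * (- 1) ^ card \<beta>) (?d l))"
  proof -
    have "y = (\<Sum>\<alpha>\<in>FX. \<Sum>l\<in>L. chain_scale (a (\<alpha>, l) * ((- 1) ^ card \<alpha> * unit_chain \<alpha> \<beta>)) (?d l))"
      unfolding y_def by (simp add: sum.cartesian_product case_prod_beta)
    also have "\<dots> = (\<Sum>\<alpha>\<in>FX. if \<alpha> = \<beta> then (\<Sum>l\<in>L. chain_scale (a (\<beta>, l) * (- 1) ^ card \<beta>) (?d l)) else 0)"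
      by (rule sum.cong[OF refl]) (auto simp: unit_chain_def)
    finally show ?thesis using \<beta> finFX by simp
  qed
  then have y0: "(\<Sum>l\<in>L. chain_scale (a (\<beta>, l) * (- 1) ^ card \<beta>) (?d l)) = 0"
    using yz(1)[OF dd] by simp
  have indepL: "Chains.independent (?d ` L)" using Chains.independent_mono[OF LH(1)] by blast
  show "\<forall>l\<in>L. a (\<beta>, l) = 0"
  proof
    fix l assume "l \<in> L"
    have "a (\<beta>, l) * (- 1) ^ card \<beta> = 0"
      by (rule Chains.sum_scale_eq_0_inj_on[OF L(2,3) indepL y0 \<open>l \<in> L\<close>])
    then show "a (\<beta>, l) = 0" by simp
  qed
  have "z = (\<Sum>\<alpha>\<in>A. \<Sum>h\<in>H. chain_scale (e (\<alpha>, h) * ?d (unit_chain \<alpha>) \<beta>) h)"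
    unfolding z_def by (simp add: sum.cartesian_product case_prod_beta)
  also have "\<dots> = (\<Sum>h\<in>H. \<Sum>\<alpha>\<in>A. chain_scale (e (\<alpha>, h) * ?d (unit_chain \<alpha>) \<beta>) h)"
    by (rule sum.swap)
  finally have "z = (\<Sum>h\<in>H. chain_scale (\<Sum>\<alpha>\<in>A. e (\<alpha>, h) * ?d (unit_chain \<alpha>) \<beta>) h)"
    by (simp add: Chains.scale_sum_left)
  then show "\<forall>h\<in>H. (\<Sum>\<alpha>\<in>A. e (\<alpha>, h) * ?d (unit_chain \<alpha>) \<beta>) = 0"
    using Chains.independentD[OF Chains.independent_mono[OF LH(1)] H(2) order_refl] yz(2)[OF dd] by auto
qed

lemma join_family_coeffs_eq_0:
  assumes sum0: "(\<Sum>p\<in>FX \<times> L. chain_scale (a p) (boundary (C \<union> G) (join_chain C (unit_chain (fst p)) (snd p))))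
      + (\<Sum>p\<in>A \<times> H. chain_scale (e p) (join_chain C (boundary (C \<union> G) (unit_chain (fst p))) (snd p))) = 0"
  shows "\<forall>p\<in>FX \<times> L. a p = 0" "\<forall>p\<in>A \<times> H. e p = 0"
proof -
  note slice = join_family_slice_coeffs_eq_0[OF sum0]
  show "\<forall>p\<in>FX \<times> L. a p = 0" using slice(1) by auto
  show "\<forall>p\<in>A \<times> H. e p = 0"
  proof (clarify)
    fix \<alpha> h assume \<alpha>: "\<alpha> \<in> A" and h: "h \<in> H"
    have "(\<Sum>\<alpha>\<in>A. chain_scale (e (\<alpha>, h)) (boundary (C \<union> G) (unit_chain \<alpha>))) = (0 :: 'a set \<Rightarrow> 'k)"
    proof
      fix \<beta>
      show "(\<Sum>\<alpha>\<in>A. chain_scale (e (\<alpha>, h)) (boundary (C \<union> G) (unit_chain \<alpha>))) \<beta> = 0 \<beta>"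
      proof (cases "\<beta> \<in> FX")
        case True
        then show ?thesis using slice(2) h by (simp add: sum_fun_apply chain_scale_apply)
      next
        case False
        have "boundary (C \<union> G) (unit_chain \<alpha>) \<beta> = (0 :: 'k)" if "\<alpha> \<in> A" for \<alpha>
        proof (rule ccontr)
          assume "boundary (C \<union> G) (unit_chain \<alpha>) \<beta> \<noteq> (0 :: 'k)"
          moreover have "boundary (C \<union> G) (unit_chain \<alpha>) \<in> (chains_on FX :: ('a set \<Rightarrow> 'k) set)"
            using that A(1) by (intro boundary_in_chains_on[OF FX(2)] unit_chain_in_chains_on) blast
          ultimately show False using False chains_onD by blast
        qed
        then show ?thesis by (simp add: sum_fun_apply chain_scale_apply)
      qed
    qed
    then show "e (\<alpha>, h) = 0" by (rule Chains.sum_scale_eq_0_inj_on[OF A(2,3,4) _ \<alpha>])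
  qed
qed

lemma join_family_in_boundary_image:
  assumes FJ: "\<And>\<alpha> \<beta>. \<alpha> \<in> FX \<Longrightarrow> \<beta> \<in> FY \<Longrightarrow> \<alpha> \<union> \<beta> \<in> FJ"
  shows "\<And>\<alpha> l. \<alpha> \<in> FX \<Longrightarrow> l \<in> L
      \<Longrightarrow> boundary (C \<union> G) (join_chain C (unit_chain \<alpha>) l) \<in> boundary (C \<union> G) ` chains_on FJ"
    and "\<And>\<alpha> h. \<alpha> \<in> A \<Longrightarrow> h \<in> H
      \<Longrightarrow> join_chain C (boundary (C \<union> G) (unit_chain \<alpha>)) h \<in> boundary (C \<union> G) ` chains_on FJ"
proof -
  fix \<alpha> l assume "\<alpha> \<in> FX" "l \<in> L"
  then show "boundary (C \<union> G) (join_chain C (unit_chain \<alpha>) l) \<in> boundary (C \<union> G) ` chains_on FJ"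
    using L(1) by (auto intro!: imageI join_chain_in_chains_on[OF unit_chain_in_chains_on] FJ)
next
  fix \<alpha> h assume \<alpha>: "\<alpha> \<in> A" and h: "h \<in> H"
  have "boundary (C \<union> G) (join_chain C (unit_chain \<alpha>) h) = join_chain C (boundary (C \<union> G) (unit_chain \<alpha>)) h"
  proof (rule boundary_join_unit_chain_cycle[OF CG])
    show "\<alpha> \<subseteq> C" using \<alpha> A(1) FX(1) by blast
    show "\<beta> \<subseteq> G" if "h \<beta> \<noteq> 0" for \<beta> using chains_onD[OF subsetD[OF H(1) h] that] FY(1) by blast
    show "boundary (C \<union> G) h = 0" using h H(3) by blast
  qed
  moreover have "join_chain C (unit_chain \<alpha>) h \<in> chains_on FJ"
    by (rule join_chain_in_chains_on[OF unit_chain_in_chains_on _ FJ]) (use \<alpha> h A(1) H(1) in auto)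
  ultimately show "join_chain C (boundary (C \<union> G) (unit_chain \<alpha>)) h \<in> boundary (C \<union> G) ` chains_on FJ"
    by (metis image_eqI)
qed

lemma card_join_family_le_boundary_rank:
  fixes K :: "'k itself"
  assumes FJ: "finite FJ" "\<And>\<alpha> \<beta>. \<alpha> \<in> FX \<Longrightarrow> \<beta> \<in> FY \<Longrightarrow> \<alpha> \<union> \<beta> \<in> FJ"
  shows "card FX * card L + card A * card H \<le> boundary_rank K (C \<union> G) FJ"
proof -
  let ?d = "boundary (C \<union> G) :: ('a set \<Rightarrow> 'k) \<Rightarrow> _"
  define vec :: "'a set \<times> ('a set \<Rightarrow> 'k) + 'a set \<times> ('a set \<Rightarrow> 'k) \<Rightarrow> 'a set \<Rightarrow> 'k"
    where "vec = case_sum (\<lambda>p. ?d (join_chain C (unit_chain (fst p)) (snd p)))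
      (\<lambda>p. join_chain C (?d (unit_chain (fst p))) (snd p))"
  define I where "I = Inl ` (FX \<times> L) \<union> Inr ` (A \<times> H)"
  have finFX: "finite FX" by (rule finite_subset_Pow(1)[OF CG(2) FX(1)])
  have finI: "finite I" unfolding I_def using finFX L(2) A(2) H(2) by simp
  have cardI: "card I = card FX * card L + card A * card H"
    unfolding I_def using finFX L(2) A(2) H(2)
    by (subst card_Un_disjoint) (auto simp: card_image card_cartesian_product)
  have "\<forall>i\<in>I. c i = 0" if "(\<Sum>i\<in>I. chain_scale (c i) (vec i)) = 0" for c
  proof -
    have "(\<Sum>i\<in>I. chain_scale (c i) (vec i))
        = (\<Sum>p\<in>FX \<times> L. chain_scale (c (Inl p)) (?d (join_chain C (unit_chain (fst p)) (snd p))))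
          + (\<Sum>p\<in>A \<times> H. chain_scale (c (Inr p)) (join_chain C (?d (unit_chain (fst p))) (snd p)))"
      unfolding I_def using finFX L(2) A(2) H(2)
      by (subst sum.union_disjoint) (auto simp: sum.reindex vec_def)
    with that have "(\<Sum>p\<in>FX \<times> L. chain_scale (c (Inl p)) (?d (join_chain C (unit_chain (fst p)) (snd p))))
          + (\<Sum>p\<in>A \<times> H. chain_scale (c (Inr p)) (join_chain C (?d (unit_chain (fst p))) (snd p))) = 0"
      by simp
    from join_family_coeffs_eq_0[OF this] show ?thesis unfolding I_def by auto
  qed
  from Chains.independent_image_if_scalars_zero[OF finI this]
  have inj: "inj_on vec I" and indep: "Chains.independent (vec ` I)" by auto
  have "vec ` I \<subseteq> ?d ` chains_on FJ"
    using join_family_in_boundary_image[OF FJ(2)] unfolding I_def vec_def by auto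
  then have "card (vec ` I) \<le> boundary_rank K (C \<union> G) FJ" unfolding boundary_rank_def
    by (rule Chains.independent_card_le_dim_finitely_spanned(2)[OF finitely_spanned_boundary_image[OF FJ(1)] _ indep])
  then show ?thesis using card_image[OF inj] cardI by simp
qed

end

lemma boundary_rank_join_ge:
  fixes K :: "'k::field itself" and C G :: "'a::linorder set"
  assumes CG: "C \<inter> G = {}" "finite C" "finite G"
    and FX: "FX \<subseteq> Pow C" "down_closed FX" and FY: "FY \<subseteq> Pow G" "down_closed FY"
    and FJ: "finite FJ" "\<And>\<alpha> \<beta>. \<alpha> \<in> FX \<Longrightarrow> \<beta> \<in> FY \<Longrightarrow> \<alpha> \<union> \<beta> \<in> FJ"
  shows "card FX * boundary_rank K (C \<union> G) FY
      + boundary_rank K (C \<union> G) FX * (cycle_dim K (C \<union> G) FY - boundary_rank K (C \<union> G) FY)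
    \<le> boundary_rank K (C \<union> G) FJ"
proof -
  let ?d = "boundary (C \<union> G) :: ('a set \<Rightarrow> 'k) \<Rightarrow> _"
  let ?Z = "{f \<in> chains_on FY. ?d f = 0}"
  have finFX: "finite FX" using finite_subset_Pow[OF CG(2) FX(1)] by auto
  have finFY: "finite FY" "\<And>\<sigma>. \<sigma> \<in> FY \<Longrightarrow> finite \<sigma>" using finite_subset_Pow[OF CG(3) FY(1)] by auto
  obtain L where L: "L \<subseteq> chains_on FY" "inj_on ?d L" "Chains.independent (?d ` L)"
      "?d ` chains_on FY \<subseteq> Chains.span (?d ` L)" "finite L" "card L = boundary_rank K (C \<union> G) FY"
    unfolding boundary_rank_def by (rule Chains.lift_basis_of_image[OF finitely_spanned_boundary_image[OF finFY(1)]])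
  have dLZ: "?d ` L \<subseteq> ?Z"
  proof
    fix x assume "x \<in> ?d ` L"
    then obtain l where l: "l \<in> chains_on FY" "x = ?d l" using L(1) by blast
    have "?d (?d l) = 0" by (rule boundary_boundary_chains_on[OF _ _ l(1)]) (use CG(2,3) FY(1) in auto)
    then show "x \<in> ?Z" using l boundary_in_chains_on[OF FY(2)] by blast
  qed
  have "finitely_spanned chain_scale ?Z"
    by (rule Chains.finitely_spanned_subset[OF finitely_spanned_chains_on[OF finFY(1)]]) blast
  then obtain H where H: "H \<subseteq> ?Z" "finite H" "Chains.independent (?d ` L \<union> H)" "?d ` L \<inter> H = {}"
      "card (?d ` L) + card H = Chains.dim ?Z"
    by (rule Chains.independent_extend_finitely_spanned[OF _ dLZ L(3)])
  obtain A where A: "A \<subseteq> FX" "inj_on (\<lambda>\<alpha>. ?d (unit_chain \<alpha>)) A"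
      "Chains.independent ((\<lambda>\<alpha>. ?d (unit_chain \<alpha>)) ` A)" "card A = boundary_rank K (C \<union> G) FX"
    unfolding boundary_rank_def by (rule lift_basis_of_image_unit_chains[OF module_hom_boundary finFX])
  have "card FX * card L + card A * card H \<le> boundary_rank K (C \<union> G) FJ"
  proof (rule card_join_family_le_boundary_rank[OF CG FX FY L(1,5,2) _ H(2) _ H(3,4) A(1) _ A(2,3) FJ])
    show "H \<subseteq> chains_on FY" "\<And>h. h \<in> H \<Longrightarrow> ?d h = 0" using H(1) by auto
    show "finite A" using A(1) finFX by (rule finite_subset)
  qed
  moreover have "card H = cycle_dim K (C \<union> G) FY - boundary_rank K (C \<union> G) FY"
    using H(5) card_image[OF L(2)] L(6) unfolding cycle_dim_def by simp
  ultimately show ?thesis using L(6) A(4) by simp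
qed

lemma Un_in_Ind_Un:
  assumes "\<forall>a\<in>C. \<forall>b\<in>G. \<not> E a b \<and> \<not> E b a" "\<alpha> \<in> Ind E C" "\<beta> \<in> Ind E G"
  shows "\<alpha> \<union> \<beta> \<in> Ind E (C \<union> G)"
  using assms unfolding Ind_def by blast

lemma card_Ind_Un:
  assumes "C \<inter> G = {}" "\<forall>a\<in>C. \<forall>b\<in>G. \<not> E a b \<and> \<not> E b a"
  shows "card (Ind E (C \<union> G)) = card (Ind E C) * card (Ind E G)"
proof -
  have "bij_betw (\<lambda>(\<alpha>, \<beta>). \<alpha> \<union> \<beta>) (Ind E C \<times> Ind E G) (Ind E (C \<union> G))"
  proof (rule bij_betw_byWitness[where f' = "\<lambda>\<sigma>. (\<sigma> \<inter> C, \<sigma> - C)"])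
    show "\<forall>p\<in>Ind E C \<times> Ind E G. (\<lambda>\<sigma>. (\<sigma> \<inter> C, \<sigma> - C)) ((\<lambda>(\<alpha>, \<beta>). \<alpha> \<union> \<beta>) p) = p"
      using assms(1) Ind_subset_Pow by fastforce
    show "\<forall>\<sigma>\<in>Ind E (C \<union> G). (\<lambda>(\<alpha>, \<beta>). \<alpha> \<union> \<beta>) ((\<lambda>\<sigma>. (\<sigma> \<inter> C, \<sigma> - C)) \<sigma>) = \<sigma>" by auto
    show "(\<lambda>(\<alpha>, \<beta>). \<alpha> \<union> \<beta>) ` (Ind E C \<times> Ind E G) \<subseteq> Ind E (C \<union> G)"
      using Un_in_Ind_Un[OF assms(2)] by auto
    show "(\<lambda>\<sigma>. (\<sigma> \<inter> C, \<sigma> - C)) ` Ind E (C \<union> G) \<subseteq> Ind E C \<times> Ind E G"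
      unfolding Ind_def by auto
  qed
  from bij_betw_same_card[OF this] show ?thesis by (simp add: card_cartesian_product)
qed

lemma btilde_disjoint_Un_le:
  fixes K :: "'k::field itself" and C G :: "'a::linorder set"
  assumes CG: "finite C" "finite G" "C \<inter> G = {}" and no_edge: "\<forall>a\<in>C. \<forall>b\<in>G. \<not> E a b \<and> \<not> E b a"
  shows "btilde K E (C \<union> G) \<le> btilde K E C * btilde K E G"
proof -
  let ?S = "C \<union> G"
  define nX where "nX = int (card (Ind E C))"
  define rX where "rX = int (boundary_rank K ?S (Ind E C))"
  define rY where "rY = int (boundary_rank K ?S (Ind E G))"
  define zY where "zY = int (cycle_dim K ?S (Ind E G))"
  have fin: "finite ?S" "finite (Ind E G)" using CG by (auto intro: finite_subset_Pow(1)[OF _ Ind_subset_Pow])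
  have bX: "int (btilde K E C) = nX - 2 * rX"
    using btilde_eq[OF CG(1), of K E] boundary_rank_superset[OF fin(1) _ Ind_subset_Pow, of C K E]
    unfolding nX_def rX_def by simp
  have "int (btilde K E G) = int (card (Ind E G)) - 2 * rY"
    using btilde_eq[OF CG(2), of K E] boundary_rank_superset[OF fin(1) _ Ind_subset_Pow, of G K E]
    unfolding rY_def by simp
  moreover have "int (card (Ind E G)) = zY + rY"
    using card_eq_cycle_dim_add_boundary_rank[OF fin(2), of K ?S] unfolding zY_def rY_def by simp
  ultimately have bY: "int (btilde K E G) = zY - rY" by simp
  have "int (card (Ind E C)) * rY + rX * (zY - rY) \<le> int (boundary_rank K ?S (Ind E ?S))"
  proof -
    have "card (Ind E C) * boundary_rank K ?S (Ind E G)
        + boundary_rank K ?S (Ind E C) * (cycle_dim K ?S (Ind E G) - boundary_rank K ?S (Ind E G))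
      \<le> boundary_rank K ?S (Ind E ?S)"
      by (rule boundary_rank_join_ge[OF CG(3,1,2) Ind_subset_Pow down_closed_Ind Ind_subset_Pow down_closed_Ind
            finite_subset_Pow(1)[OF fin(1) Ind_subset_Pow] Un_in_Ind_Un[OF no_edge]])
    then have "int (card (Ind E C) * boundary_rank K ?S (Ind E G)
        + boundary_rank K ?S (Ind E C) * (cycle_dim K ?S (Ind E G) - boundary_rank K ?S (Ind E G)))
      \<le> int (boundary_rank K ?S (Ind E ?S))" by (simp only: of_nat_le_iff)
    moreover have "boundary_rank K ?S (Ind E G) \<le> cycle_dim K ?S (Ind E G)"
      using bY unfolding rY_def zY_def by linarith
    ultimately show ?thesis unfolding rX_def rY_def zY_def by (simp add: of_nat_diff)
  qed
  then have "int (btilde K E ?S) \<le> nX * (zY + rY) - 2 * (nX * rY + rX * (zY - rY))"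
    using btilde_eq[OF fin(1), of K E] card_Ind_Un[OF CG(3) no_edge] \<open>int (card (Ind E G)) = zY + rY\<close>
    unfolding nX_def by simp
  also have "\<dots> = (nX - 2 * rX) * (zY - rY)" by (simp add: algebra_simps)
  also have "\<dots> = int (btilde K E C * btilde K E G)" using bX bY by simp
  finally show ?thesis by (simp only: of_nat_le_iff)
qed

lemma btilde_delete_vertices_le:
  assumes G: "simple_graph V E" and vs: "distinct vs" "set vs \<subseteq> V"
  shows "btilde K E V \<le> btilde K E (V - set vs)
    + (\<Sum>i<length vs. btilde K E (V - closed_nbhd V E (vs ! i) - set (take i vs)))"
  using vs
proof (induction vs rule: rev_induct)
  case (snoc v vs)
  let ?S = "V - set vs"
  have v: "v \<in> ?S" using snoc.prems by auto
  have "finite ?S" using G unfolding simple_graph_def by simp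
  then have "btilde K E ?S \<le> btilde K E (?S - {v}) + btilde K E (?S - closed_nbhd ?S E v)"
    by (rule btilde_delete_vertex_le[OF G _ v])
  moreover have "?S - {v} = V - set (vs @ [v])" by auto
  moreover have "?S - closed_nbhd ?S E v = V - closed_nbhd V E v - set vs"
    unfolding closed_nbhd_def by auto
  moreover have "(\<Sum>i<length (vs @ [v]). btilde K E (V - closed_nbhd V E ((vs @ [v]) ! i) - set (take i (vs @ [v]))))
      = (\<Sum>i<length vs. btilde K E (V - closed_nbhd V E (vs ! i) - set (take i vs)))
        + btilde K E (V - closed_nbhd V E v - set vs)"
    by (simp add: nth_append)
  ultimately show ?case using snoc by fastforce
qed simp

lemma component_of_subset: "component_of E S x \<subseteq> S"
  unfolding component_of_def by blast

lemma component_of_no_edge: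
  assumes sym: "\<And>u v. E u v \<Longrightarrow> E v u" and "a \<in> component_of E S x" "b \<in> S - component_of E S x"
  shows "\<not> E a b \<and> \<not> E b a"
proof -
  let ?R = "{(u, w). u \<in> S \<and> w \<in> S \<and> E u w}"
  have "\<not> E a b"
  proof
    assume "E a b"
    then have "(x, b) \<in> ?R\<^sup>*" using assms(2,3) unfolding component_of_def by (auto intro: rtrancl_into_rtrancl)
    then show False using assms(3) unfolding component_of_def by blast
  qed
  then show ?thesis using sym by blast
qed

theorem lemmaA1:
  fixes K :: "'k::field itself"
    and V :: "'a::linorder set" and E :: "'a \<Rightarrow> 'a \<Rightarrow> bool"
    and vs :: "'a list" and C :: "'a set"
  assumes graph: "simple_graph V E"
    and vs_dist: "distinct vs" and vs_in: "set vs \<subseteq> V" and vs_ne: "vs \<noteq> []"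
    and cut: "\<not> (\<exists>x \<in> V - set vs. V - set vs = component_of E (V - set vs) x)"
    and comp: "is_component E (V - set vs) C"
  shows "btilde K E V \<le>
           btilde K E C * btilde K E (V - set vs - C)
           + (\<Sum>i<length vs. btilde K E (V - closed_nbhd V E (vs ! i) - set (take i vs)))"
proof -
  let ?S = "V - set vs"
  obtain x where C: "C = component_of E ?S x" using comp unfolding is_component_def by blast
  have finite: "finite C" "finite (?S - C)" and sym: "\<And>u v. E u v \<Longrightarrow> E v u"
    using graph component_of_subset[of E ?S x] unfolding simple_graph_def C by (auto intro: finite_subset)
  have "btilde K E ?S = btilde K E (C \<union> (?S - C))"
    using component_of_subset[of E ?S x] unfolding C by (simp add: Un_absorb1)
  also have "\<dots> \<le> btilde K E C * btilde K E (?S - C)"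
  proof (rule btilde_disjoint_Un_le[OF finite])
    show "\<forall>a\<in>C. \<forall>b\<in>?S - C. \<not> E a b \<and> \<not> E b a"
      unfolding C by (intro ballI component_of_no_edge[where E = E]) (rule sym)
  qed auto
  finally show ?thesis using btilde_delete_vertices_le[OF graph vs_dist vs_in, of K] by linarith
qed

end
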